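(* Let $V$ be a real vector space of dimension $m\ge1$, let $\Gamma$ be a finitely generated free abelian group which is a dense subgroup of $V$ acting by translations, and let $\mathcal C$ be a countable collection of affine hyperplanes of $V$, invariant under translation by $\Gamma$, consisting of finitely many $\Gamma$-orbits, and whose normal vectors span $V$. Then there is a group homomorphism $\xi_*:H_0(\Gamma;CV_{\mathcal C})\to\bigoplus_{\mathcal J}\mathbb Z/2$ such that for every $v\in\mathcal P$ there exist a singular flag $\mathcal F=(\theta_0,\dots,\theta_{m-1})$ with $\theta_0=\{v\}$ and an element $e_v\in H_0(\Gamma;CV_{\mathcal C})$ such that $\xi_*(e_v)$ has value $1$ at the coordinate $[\mathcal F]$.
   Context: $\mathcal P$ is the set of points of $V$ obtained as $0$-dimensional intersections of $m$ elements of $\mathcal C$. For $0\le k\le m-1$, $\mathcal C^{(k)}$ is the set of $k$-dimensional affine subspaces formed as intersections of elements of $\mathcal C$. A singular flag is a sequence $(\theta_0,\dots,\theta_{m-1})$ with $\theta_j\in\mathcal C^{(j)}$ and $\theta_j\subset\theta_{j+1}$; $\mathcal J_o$ is the set of singular flags, on which $\Gamma$ acts by translation, $\mathcal J=\mathcal J_o/\Gamma$ the set of orbits, and $[\mathcal F]$ the orbit of $\mathcal F$. A $\mathcal C$-tope is a compact polytope which is the closure of its interior and whose $(m-1)$-dimensional faces lie in elements of $\mathcal C$. With $V'=V\setminus\bigcup\mathcal C$, $CV_{\mathcal C}$ is the ring of integer-valued functions on $V'$ generated by indicators of $P\cap V'$, $P$ a $\mathcal C$-tope, with $\Gamma$ acting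 by translation; $H_0(\Gamma;\cdot)$ denotes group homology (coinvariants). *)

theory Defs
  imports "HOL-Analysis.Analysis" "HOL-Algebra.Algebra"
begin

definition affine_hyperplane :: "'v::euclidean_space set \<Rightarrow> bool" where
  "affine_hyperplane H \<longleftrightarrow> (\<exists>a b. a \<noteq> 0 \<and> H = {x. a \<bullet> x = b})"

definition normals :: "'v::euclidean_space set set \<Rightarrow> 'v set" where
  "normals \<C> = {a. a \<noteq> 0 \<and> (\<exists>b. {x. a \<bullet> x = b} \<in> \<C>)}"

definition int_span :: "'v::real_vector set \<Rightarrow> 'v set" where
  "int_span B = {\<Sum>b\<in>B. of_int (c b) *\<^sub>R b | c. True}"

definition int_independent :: "'v::real_vector set \<Rightarrow> bool" where
  "int_independent B \<longleftrightarrow>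
     (\<forall>c. (\<Sum>b\<in>B. of_int (c b) *\<^sub>R b) = 0 \<longrightarrow> (\<forall>b\<in>B. c b = 0))"

definition fg_free_subgroup :: "'v::real_vector set \<Rightarrow> bool" where
  "fg_free_subgroup \<Gamma> \<longleftrightarrow> (\<exists>B. finite B \<and> int_independent B \<and> \<Gamma> = int_span B)"

definition points_P :: "'v::euclidean_space set set \<Rightarrow> 'v set" where
  "points_P \<C> = {v. \<exists>F. F \<subseteq> \<C> \<and> finite F \<and> card F = DIM('v) \<and> \<Inter>F = {v}}"

definition C_k :: "'v::euclidean_space set set \<Rightarrow> nat \<Rightarrow> 'v set set" where
  "C_k \<C> k = {\<theta>. \<exists>F. F \<subseteq> \<C> \<and> F \<noteq> {} \<and> \<theta> = \<Inter>F \<and> \<theta> \<noteq> {} \<and> aff_dim \<theta> = int k}"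

definition singular_flags :: "'v::euclidean_space set set \<Rightarrow> 'v set list set" where
  "singular_flags \<C> = {fl. length fl = DIM('v)
      \<and> (\<forall>j<DIM('v). fl ! j \<in> C_k \<C> j)
      \<and> (\<forall>j. Suc j < DIM('v) \<longrightarrow> fl ! j \<subseteq> fl ! Suc j)}"

definition translate_flag :: "'v::euclidean_space \<Rightarrow> 'v set list \<Rightarrow> 'v set list" where
  "translate_flag g fl = map (\<lambda>\<theta>. (+) g ` \<theta>) fl"

definition flag_orbit :: "'v::euclidean_space set \<Rightarrow> 'v set list \<Rightarrow> 'v set list set" where
  "flag_orbit \<Gamma> fl = {translate_flag g fl | g. g \<in> \<Gamma>}"

definition flag_orbits :: "'v::euclidean_space set \<Rightarrow> 'v set set \<Rightarrow> 'v set list set set" where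
  "flag_orbits \<Gamma> \<C> = flag_orbit \<Gamma> ` singular_flags \<C>"

definition C_tope :: "'v::euclidean_space set set \<Rightarrow> 'v set \<Rightarrow> bool" where
  "C_tope \<C> P \<longleftrightarrow> polytope P \<and> compact P \<and> closure (interior P) = P
      \<and> (\<forall>F. F facet_of P \<longrightarrow> (\<exists>H\<in>\<C>. F \<subseteq> H))"

definition V' :: "'v::euclidean_space set set \<Rightarrow> 'v set" where
  "V' \<C> = UNIV - \<Union>\<C>"

text \<open>CV_\<C>: integer valued functions on V' (represented as functions on V vanishing
  off V') forming the ring generated by the indicators of P \<inter> V', P a \<C>-tope.\<close>
inductive_set CV :: "'v::euclidean_space set set \<Rightarrow> ('v \<Rightarrow> int) set" for \<C> where
  gen: "C_tope \<C> P \<Longrightarrow> indicator (P \<inter> V' \<C>) \<in> CV \<C>"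
| zero: "(\<lambda>x. 0) \<in> CV \<C>"
| diff: "f \<in> CV \<C> \<Longrightarrow> g \<in> CV \<C> \<Longrightarrow> (\<lambda>x. f x - g x) \<in> CV \<C>"
| mult: "f \<in> CV \<C> \<Longrightarrow> g \<in> CV \<C> \<Longrightarrow> (\<lambda>x. f x * g x) \<in> CV \<C>"

definition CV_group :: "'v::euclidean_space set set \<Rightarrow> ('v \<Rightarrow> int) monoid" where
  "CV_group \<C> = \<lparr>carrier = CV \<C>, monoid.mult = (\<lambda>f g x. f x + g x), one = (\<lambda>x. 0)\<rparr>"

definition translate_fun :: "'v::euclidean_space \<Rightarrow> ('v \<Rightarrow> int) \<Rightarrow> ('v \<Rightarrow> int)" where
  "translate_fun g f = (\<lambda>x. f (x - g))"

text \<open>H_0(\<Gamma>; CV_\<C>): coinvariants, CV_\<C> modulo the subgroup generated by f - g\<cdot>f.\<close>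
definition coinv_subgroup :: "'v::euclidean_space set \<Rightarrow> 'v set set \<Rightarrow> ('v \<Rightarrow> int) set" where
  "coinv_subgroup \<Gamma> \<C> = generate (CV_group \<C>)
      {(\<lambda>x. f x - translate_fun g f x) | f g. f \<in> CV \<C> \<and> g \<in> \<Gamma>}"

definition H0 :: "'v::euclidean_space set \<Rightarrow> 'v set set \<Rightarrow> ('v \<Rightarrow> int) set monoid" where
  "H0 \<Gamma> \<C> = CV_group \<C> Mod coinv_subgroup \<Gamma> \<C>"

definition Z2_sum :: "'v::euclidean_space set \<Rightarrow> 'v set set \<Rightarrow> ('v set list set \<Rightarrow> int) monoid" where
  "Z2_sum \<Gamma> \<C> = sum_group (flag_orbits \<Gamma> \<C>) (\<lambda>_. integer_mod_group 2)"

end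

(* For f in CV and a singular flag at a point p, sum the germs of f over the 2^m sectors at p that
   cling to the flag.  This germ sum is additive in f and equivariant under Gamma, and it can only be
   odd when p is a vertex of the finitely many hyperplanes cutting out the cells on which f is
   constant.  Hence, for each orbit J of flags, the translates of a fixed flag of J with odd germ sum
   form a finite set D_J(f) in Gamma = Z^n, with D_J(f + g) the symmetric difference of D_J(f) and
   D_J(g), and D_J(h.f) = h + D_J(f).  Summing over D_J(f), modulo 2, an integer valued polynomial
   function on Z^n of minimal degree among those with an odd sum on some D_J(g) gives the coordinate
   xi_J: its value on D_J(f - h.f) is even, as the difference polynomial p(. + h) - p has smaller
   degree.  At v in P, the box bounded by the m hyperplanes through v and by translates of them under
   the dense group Gamma has germ sum 1 at the coordinate flag, so some D_J(f) is nonempty, and a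
   product of binomial coefficients with sum 1 over it shows that xi_J takes the value 1. *)

theory Submission
  imports Defs
begin

section \<open>Polynomial functions on an additive semigroup and a parity valuation\<close>

definition add_closed :: "'a::plus set \<Rightarrow> bool" where
  "add_closed G \<longleftrightarrow> (\<forall>x\<in>G. \<forall>y\<in>G. x + y \<in> G)"

text \<open>\<open>diff_poly G k\<close> consists of the functions whose \<open>k\<close>-fold finite differences along \<open>G\<close>
  vanish on \<open>G\<close>, i.e. the polynomial functions of degree \<open>< k\<close> on \<open>G\<close>.\<close>

fun diff_poly :: "'a::ab_semigroup_add set \<Rightarrow> nat \<Rightarrow> ('a \<Rightarrow> real) set" where
  "diff_poly G 0 = {p. \<forall>x\<in>G. p x = 0}"
| "diff_poly G (Suc k) = {p. \<forall>h\<in>G. (\<lambda>x. p (x + h) - p x) \<in> diff_poly G k}"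

lemma diff_poly_cong:
  assumes "add_closed G" "p \<in> diff_poly G k" "\<And>x. x \<in> G \<Longrightarrow> p x = q x"
  shows "q \<in> diff_poly G k"
  using assms(2,3)
proof (induction k arbitrary: p q)
  case 0
  then show ?case by auto
next
  case (Suc k)
  show ?case
  proof (simp, intro ballI)
    fix h assume h: "h \<in> G"
    have "(\<lambda>x. p (x + h) - p x) \<in> diff_poly G k" using Suc.prems h by auto
    then show "(\<lambda>x. q (x + h) - q x) \<in> diff_poly G k"
      by (rule Suc.IH) (use Suc.prems h assms(1) in \<open>auto simp: add_closed_def\<close>)
  qed
qed

lemma diff_poly_Suc:
  assumes "add_closed G" "p \<in> diff_poly G k"
  shows "p \<in> diff_poly G (Suc k)"
  using assms(2)
proof (induction k arbitrary: p)
  case 0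
  then show ?case using assms(1) by (auto simp: add_closed_def)
next
  case (Suc k)
  then show ?case by auto
qed

lemma diff_poly_mono:
  assumes "add_closed G" "p \<in> diff_poly G k" "k \<le> k'"
  shows "p \<in> diff_poly G k'"
  using assms(3,2)
proof (induction k' rule: dec_induct)
  case base
  then show ?case by simp
next
  case (step n)
  then show ?case using diff_poly_Suc[OF assms(1)] by blast
qed

lemma diff_poly_add:
  assumes "p \<in> diff_poly G k" "q \<in> diff_poly G k"
  shows "(\<lambda>x. p x + q x) \<in> diff_poly G k"
  using assms
proof (induction k arbitrary: p q)
  case 0
  then show ?case by auto
next
  case (Suc k)
  show ?case
  proof (simp, intro ballI)
    fix h assume "h \<in> G"
    then have "(\<lambda>x. (p (x + h) - p x) + (q (x + h) - q x)) \<in> diff_poly G k"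
      using Suc by auto
    then show "(\<lambda>x. p (x + h) + q (x + h) - (p x + q x)) \<in> diff_poly G k"
      by (simp add: algebra_simps)
  qed
qed

lemma diff_poly_cmult:
  assumes "p \<in> diff_poly G k"
  shows "(\<lambda>x. c * p x) \<in> diff_poly G k"
  using assms
proof (induction k arbitrary: p)
  case 0
  then show ?case by auto
next
  case (Suc k)
  show ?case
  proof (simp, intro ballI)
    fix h assume "h \<in> G"
    then have "(\<lambda>x. c * (p (x + h) - p x)) \<in> diff_poly G k"
      using Suc by auto
    then show "(\<lambda>x. c * p (x + h) - c * p x) \<in> diff_poly G k"
      by (simp add: algebra_simps)
  qed
qed

lemma diff_poly_shift:
  assumes "add_closed G" "p \<in> diff_poly G k" "h \<in> G"
  shows "(\<lambda>x. p (x + h)) \<in> diff_poly G k"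
  using assms(2)
proof (induction k arbitrary: p)
  case 0
  then show ?case using assms by (auto simp: add_closed_def)
next
  case (Suc k)
  show ?case
  proof (simp, intro ballI)
    fix h' assume "h' \<in> G"
    then have "(\<lambda>x. p (x + h') - p x) \<in> diff_poly G k" using Suc.prems by auto
    then have "(\<lambda>x. (\<lambda>x. p (x + h') - p x) (x + h)) \<in> diff_poly G k" by (rule Suc.IH)
    then show "(\<lambda>x. p (x + h' + h) - p (x + h)) \<in> diff_poly G k"
      by (simp add: algebra_simps)
  qed
qed

text \<open>Leibniz rule: the difference of \<open>p q\<close> along \<open>h\<close> is \<open>\<Delta>p \<cdot> q(\<cdot> + h) + p \<cdot> \<Delta>q\<close>.\<close>

lemma diff_poly_mult:
  assumes "add_closed G" "p \<in> diff_poly G (Suc a)" "q \<in> diff_poly G (Suc b)"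
  shows "(\<lambda>x. p x * q x) \<in> diff_poly G (Suc (a + b))"
  using assms(2,3)
proof (induction "a + b" arbitrary: a b p q rule: less_induct)
  case less
  have lower: "(\<lambda>x. p' x * q' x) \<in> diff_poly G (a + b)"
    if p': "p' \<in> diff_poly G a'" and q': "q' \<in> diff_poly G (Suc b')" and ab: "a' + b' = a + b"
    for p' q' a' b'
  proof (cases a')
    case 0
    then have "(\<lambda>x. p' x * q' x) \<in> diff_poly G 0" using p' by auto
    then show ?thesis using diff_poly_mono[OF assms(1)] by blast
  next
    case (Suc a'')
    from p' have p'': "p' \<in> diff_poly G (Suc a'')" unfolding Suc .
    have deg: "Suc (a'' + b') = a + b" using ab Suc by simp
    then have "a'' + b' < a + b" by simp
    from less.hyps[OF this p'' q'] show ?thesis unfolding deg .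
  qed
  show ?case
  proof (simp, intro ballI)
    fix h assume h: "h \<in> G"
    define dp where "dp = (\<lambda>x. p (x + h) - p x)"
    define dq where "dq = (\<lambda>x. q (x + h) - q x)"
    have dp: "dp \<in> diff_poly G a" and dq: "dq \<in> diff_poly G b"
      using less.prems h by (auto simp: dp_def dq_def)
    have qh: "(\<lambda>x. q (x + h)) \<in> diff_poly G (Suc b)"
      using diff_poly_shift[OF assms(1) less.prems(2) h] .
    have "(\<lambda>x. dp x * q (x + h)) \<in> diff_poly G (a + b)"
      using lower[OF dp qh] by simp
    moreover have "(\<lambda>x. dq x * p x) \<in> diff_poly G (a + b)"
      using lower[OF dq less.prems(1)] by (simp add: add.commute)
    ultimately have "(\<lambda>x. dp x * q (x + h) + dq x * p x) \<in> diff_poly G (a + b)"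
      by (rule diff_poly_add)
    then show "(\<lambda>x. p (x + h) * q (x + h) - p x * q x) \<in> diff_poly G (a + b)"
      by (simp add: dp_def dq_def algebra_simps)
  qed
qed

lemma diff_poly_prod:
  assumes "add_closed G" "finite I" "\<And>i. i \<in> I \<Longrightarrow> f i \<in> diff_poly G (Suc (d i))"
  shows "(\<lambda>x. \<Prod>i\<in>I. f i x) \<in> diff_poly G (Suc (\<Sum>i\<in>I. d i))"
  using assms(2,3)
proof (induction I rule: finite_induct)
  case empty
  then show ?case by simp
next
  case (insert i I)
  then show ?case using diff_poly_mult[OF assms(1), of "f i" "d i"] by simp
qed

definition int_coord :: "'v::real_vector set \<Rightarrow> 'v \<Rightarrow> 'v \<Rightarrow> int" where
  "int_coord B x = (SOME c. x = (\<Sum>b\<in>B. of_int (c b) *\<^sub>R b))"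

lemma int_coord_sum:
  assumes "x \<in> int_span B"
  shows "x = (\<Sum>b\<in>B. of_int (int_coord B x b) *\<^sub>R b)"
proof -
  obtain c where "x = (\<Sum>b\<in>B. of_int (c b) *\<^sub>R b)" using assms unfolding int_span_def by auto
  then show ?thesis unfolding int_coord_def by (rule someI[where P="\<lambda>c. x = (\<Sum>b\<in>B. of_int (c b) *\<^sub>R b)"])
qed

lemma int_coord_unique:
  assumes "int_independent B" "x = (\<Sum>b\<in>B. of_int (c b) *\<^sub>R b)" "b \<in> B"
  shows "int_coord B x b = c b"
proof -
  have "x \<in> int_span B" using assms(2) unfolding int_span_def by auto
  have "(\<Sum>b\<in>B. of_int (int_coord B x b - c b) *\<^sub>R b)
      = (\<Sum>b\<in>B. of_int (int_coord B x b) *\<^sub>R b) - (\<Sum>b\<in>B. of_int (c b) *\<^sub>R b)"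
    by (simp add: sum_subtractf scaleR_diff_left)
  also have "\<dots> = 0" using int_coord_sum[OF \<open>x \<in> int_span B\<close>] assms(2) by simp
  finally have "(\<Sum>b\<in>B. of_int (int_coord B x b - c b) *\<^sub>R b) = 0" .
  from assms(1)[unfolded int_independent_def, rule_format, OF this assms(3)] show ?thesis by simp
qed

lemma int_coord_inj:
  assumes "x \<in> int_span B" "y \<in> int_span B" "\<And>b. b \<in> B \<Longrightarrow> int_coord B x b = int_coord B y b"
  shows "x = y"
  using int_coord_sum[OF assms(1)] int_coord_sum[OF assms(2)] assms(3) by (metis (no_types, lifting) sum.cong)

lemma int_span_add:
  assumes "x \<in> int_span B" "y \<in> int_span B"
  shows "x + y \<in> int_span B"
proof -
  obtain c c' where "x = (\<Sum>b\<in>B. of_int (c b) *\<^sub>R b)" "y = (\<Sum>b\<in>B. of_int (c' b) *\<^sub>R b)"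
    using assms unfolding int_span_def by auto
  then have "x + y = (\<Sum>b\<in>B. of_int (c b + c' b) *\<^sub>R b)" by (simp add: sum.distrib scaleR_add_left)
  then show ?thesis unfolding int_span_def mem_Collect_eq by (intro exI[of _ "\<lambda>b. c b + c' b"]) simp
qed

lemma int_span_uminus:
  assumes "x \<in> int_span B"
  shows "- x \<in> int_span B"
proof -
  obtain c where "x = (\<Sum>b\<in>B. of_int (c b) *\<^sub>R b)" using assms unfolding int_span_def by auto
  then have "- x = (\<Sum>b\<in>B. of_int (- c b) *\<^sub>R b)" by (simp add: sum_negf)
  then show ?thesis unfolding int_span_def mem_Collect_eq by (intro exI[of _ "\<lambda>b. - c b"]) simp
qed

lemma add_closed_int_span: "add_closed (int_span B)"
  unfolding add_closed_def using int_span_add by blast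

lemma int_coord_add:
  assumes "int_independent B" "x \<in> int_span B" "y \<in> int_span B" "b \<in> B"
  shows "int_coord B (x + y) b = int_coord B x b + int_coord B y b"
proof -
  have "x + y = (\<Sum>b\<in>B. of_int (int_coord B x b + int_coord B y b) *\<^sub>R b)"
    using int_coord_sum[OF assms(2)] int_coord_sum[OF assms(3)] by (simp add: sum.distrib scaleR_add_left)
  from int_coord_unique[OF assms(1) this assms(4)] show ?thesis .
qed

lemma diff_poly_int_coord:
  assumes "int_independent B" "b \<in> B"
  shows "(\<lambda>x. real_of_int (int_coord B x b) - r) \<in> diff_poly (int_span B) 2"
proof -
  have "(\<lambda>x. real_of_int (int_coord B (x + h) b) - r - (real_of_int (int_coord B x b) - r))
      \<in> diff_poly (int_span B) 1" if h: "h \<in> int_span B" for h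
    by (rule diff_poly_cong[OF add_closed_int_span, of "\<lambda>_. real_of_int (int_coord B h b)"])
       (use int_coord_add[OF assms(1) _ h assms(2)] in auto)
  then show ?thesis by (simp add: numeral_2_eq_2 del: diff_poly.simps(1))
qed

lemma gbinomial_of_int_Ints: "(real_of_int n gchoose k) \<in> \<int>"
proof (cases "n \<ge> 0")
  case True
  then have "real_of_int n = of_nat (nat n)" by simp
  then show ?thesis by (metis Ints_of_nat binomial_gbinomial)
next
  case False
  have "real_of_int n gchoose k = (-1)^k * (of_nat k - real_of_int n - 1 gchoose k)"
    by (rule gbinomial_negated_upper)
  also have "of_nat k - real_of_int n - 1 = of_nat (nat (int k - n - 1))" using False by simp
  finally show ?thesis by (metis Ints_mult Ints_of_nat Ints_power Ints_minus Ints_1 binomial_gbinomial)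
qed

lemma diff_poly_gbinomial_int_coord:
  assumes "int_independent B" "b \<in> B"
  shows "(\<lambda>x. (real_of_int (int_coord B x b) - r) gchoose k) \<in> diff_poly (int_span B) (Suc k)"
proof -
  have "(\<lambda>x. \<Prod>i<k. real_of_int (int_coord B x b) - (r + of_nat i)) \<in> diff_poly (int_span B) (Suc (\<Sum>i<k. 1))"
    by (rule diff_poly_prod[OF add_closed_int_span finite_lessThan])
       (use diff_poly_int_coord[OF assms] in \<open>simp add: numeral_2_eq_2 del: diff_poly.simps\<close>)
  then have "(\<lambda>x. inverse (fact k) * (\<Prod>i<k. real_of_int (int_coord B x b) - (r + of_nat i)))
      \<in> diff_poly (int_span B) (Suc k)"
    by (intro diff_poly_cmult) (simp del: diff_poly.simps)
  moreover have "(real_of_int (int_coord B x b) - r) gchoose k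
      = inverse (fact k) * (\<Prod>i<k. real_of_int (int_coord B x b) - (r + of_nat i))" for x
    by (simp add: gbinomial_prod_rev atLeast0LessThan divide_inverse mult.commute diff_diff_eq)
  ultimately show ?thesis by simp
qed

lemma ex_not_dominated:
  fixes n :: "'a \<Rightarrow> 'b \<Rightarrow> int"
  assumes "finite B" "finite D" "D \<noteq> {}"
    and inj: "\<And>x y. x \<in> D \<Longrightarrow> y \<in> D \<Longrightarrow> (\<And>b. b \<in> B \<Longrightarrow> n x b = n y b) \<Longrightarrow> x = y"
  obtains z where "z \<in> D" "\<And>x. x \<in> D \<Longrightarrow> x \<noteq> z \<Longrightarrow> \<exists>b\<in>B. n x b < n z b"
proof -
  define S where "S x = (\<Sum>b\<in>B. n x b)" for x
  have "Max (S ` D) \<in> S ` D" using assms(2,3) by (intro Max_in) auto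
  then obtain z where z: "z \<in> D" "S z = Max (S ` D)" by auto
  have S_le: "S x \<le> S z" if "x \<in> D" for x
    unfolding z(2) using assms(2) that by simp
  have "\<exists>b\<in>B. n x b < n z b" if x: "x \<in> D" "x \<noteq> z" for x
  proof (rule ccontr)
    assume "\<not> ?thesis"
    then have ge: "n z b \<le> n x b" if "b \<in> B" for b using that by force
    have "n x b = n z b" if b: "b \<in> B" for b
    proof (rule ccontr)
      assume "n x b \<noteq> n z b"
      then have "n z b < n x b" using ge[OF b] by simp
      then have "S z < S x" unfolding S_def using sum_strict_mono_ex1[OF assms(1)] ge b by blast
      then show False using S_le[OF x(1)] by simp
    qed
    then show False using inj[OF x(1) z(1)] x(2) by blast
  qed
  then show ?thesis using that z(1) by blast
qed

text \<open>After shifting coordinates so that they are nonnegative on \<open>D\<close>, the product of the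
  binomial coefficients \<open>n\<^sub>b(x) choose n\<^sub>b(z)\<close> is \<open>1\<close> at a non-dominated point \<open>z\<close> of \<open>D\<close>
  and vanishes at every other point of \<open>D\<close>.\<close>

lemma ex_int_diff_poly_sum_eq_1:
  assumes "finite B" "int_independent B" "D \<subseteq> int_span B" "finite D" "D \<noteq> {}"
  shows "\<exists>k p. p \<in> diff_poly (int_span B) k \<and> (\<forall>x\<in>int_span B. p x \<in> \<int>) \<and> (\<Sum>x\<in>D. p x) = 1"
proof -
  define q where "q b = - (\<Sum>x\<in>D. \<bar>int_coord B x b\<bar>)" for b
  define n where "n x b = int_coord B x b - q b" for x b
  have n_nonneg: "n x b \<ge> 0" if "x \<in> D" for x b
    using member_le_sum[of x D "\<lambda>x. \<bar>int_coord B x b\<bar>"] that assms(4) unfolding n_def q_def by auto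
  have "x = y" if "x \<in> D" "y \<in> D" "\<And>b. b \<in> B \<Longrightarrow> n x b = n y b" for x y
    using that assms(3) by (intro int_coord_inj) (auto simp: n_def)
  then obtain z where z: "z \<in> D" "\<And>x. x \<in> D \<Longrightarrow> x \<noteq> z \<Longrightarrow> \<exists>b\<in>B. n x b < n z b"
    using ex_not_dominated[OF assms(1,4,5), of n] by blast
  define p where "p x = (\<Prod>b\<in>B. (real_of_int (int_coord B x b) - real_of_int (q b)) gchoose nat (n z b))" for x
  have poly: "p \<in> diff_poly (int_span B) (Suc (\<Sum>b\<in>B. nat (n z b)))"
    unfolding p_def
    by (rule diff_poly_prod[OF add_closed_int_span assms(1)]) (rule diff_poly_gbinomial_int_coord[OF assms(2)])
  have ints: "p x \<in> \<int>" for x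
    unfolding p_def using gbinomial_of_int_Ints[of "int_coord B x _ - q _"] by (intro Ints_prod) simp
  have p_D: "p x = (\<Prod>b\<in>B. of_nat (nat (n x b) choose nat (n z b)))" if "x \<in> D" for x
  proof -
    have "real_of_int (int_coord B x b) - real_of_int (q b) = of_nat (nat (n x b))" for b
      using n_nonneg[OF that, of b] unfolding n_def by simp
    then show ?thesis unfolding p_def by (simp add: binomial_gbinomial)
  qed
  have "p x = 0" if x: "x \<in> D" "x \<noteq> z" for x
  proof -
    obtain b where b: "b \<in> B" "n x b < n z b" using z(2)[OF x] by blast
    then have "nat (n x b) choose nat (n z b) = 0" using n_nonneg[OF x(1), of b] by simp
    then show ?thesis using p_D[OF x(1)] assms(1) b(1) by (auto simp: prod_zero_iff)
  qed
  then have "(\<Sum>x\<in>D. p x) = p z"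
    using z(1) assms(4) by (simp add: sum.remove)
  also have "\<dots> = 1" using p_D[OF z(1)] by simp
  finally show ?thesis using poly ints by blast
qed

definition parity_witness :: "'a::ab_semigroup_add set \<Rightarrow> 'a set set \<Rightarrow> nat \<Rightarrow> ('a \<Rightarrow> real) \<Rightarrow> bool" where
  "parity_witness G M k p \<longleftrightarrow> p \<in> diff_poly G k \<and> (\<forall>x\<in>G. p x \<in> \<int>) \<and> (\<exists>D\<in>M. odd (\<Sum>x\<in>D. \<lfloor>p x\<rfloor>))"

definition min_witness_degree :: "'a::ab_semigroup_add set \<Rightarrow> 'a set set \<Rightarrow> nat" where
  "min_witness_degree G M = (LEAST k. \<exists>p. parity_witness G M k p)"

definition min_witness :: "'a::ab_semigroup_add set \<Rightarrow> 'a set set \<Rightarrow> 'a \<Rightarrow> real" where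
  "min_witness G M = (SOME p. parity_witness G M (min_witness_degree G M) p)"

text \<open>Summing a parity witness of minimal degree over a finite set gives a valuation modulo 2
  which is additive for symmetric differences; minimality of the degree makes it vanish on the
  symmetric difference of \<open>D\<close> and \<open>h + D\<close> for every \<open>D \<in> M\<close> and \<open>h \<in> G\<close>.\<close>

definition parity_val :: "'a::ab_semigroup_add set \<Rightarrow> 'a set set \<Rightarrow> 'a set \<Rightarrow> int" where
  "parity_val G M D =
     (if (\<exists>k p. parity_witness G M k p) \<and> odd (\<Sum>x\<in>D. \<lfloor>min_witness G M x\<rfloor>) then 1 else 0)"

lemma min_witness_is_witness:
  assumes "\<exists>k p. parity_witness G M k p"
  shows "parity_witness G M (min_witness_degree G M) (min_witness G M)"
proof -
  have "\<exists>p. parity_witness G M (min_witness_degree G M) p"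
    unfolding min_witness_degree_def using assms by (rule LeastI_ex)
  then show ?thesis unfolding min_witness_def by (rule someI_ex)
qed

lemma parity_val_empty: "parity_val G M {} = 0"
  unfolding parity_val_def by simp

lemma sum_sym_diff:
  fixes f :: "'a \<Rightarrow> 'b::comm_ring_1"
  assumes "finite A" "finite B"
  shows "sum f (sym_diff A B) = sum f A + sum f B - 2 * sum f (A \<inter> B)"
proof -
  have "sum f (sym_diff A B) = sum f (A - B) + sum f (B - A)"
    using assms by (intro sum.union_disjoint) auto
  moreover have "sum f A = sum f (A - B) + sum f (A \<inter> B)"
    using sum.Int_Diff[OF assms(1), of f B] by simp
  moreover have "sum f B = sum f (B - A) + sum f (A \<inter> B)"
    using sum.Int_Diff[OF assms(2), of f A] by (simp add: Int_commute)
  ultimately show ?thesis by (simp add: algebra_simps)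
qed

lemma parity_val_sym_diff:
  assumes "finite D1" "finite D2"
  shows "parity_val G M (sym_diff D1 D2) = (parity_val G M D1 + parity_val G M D2) mod 2"
proof -
  have "odd (\<Sum>x\<in>sym_diff D1 D2. \<lfloor>p x\<rfloor>) \<longleftrightarrow>
        odd (\<Sum>x\<in>D1. \<lfloor>p x\<rfloor>) \<noteq> odd (\<Sum>x\<in>D2. \<lfloor>p x\<rfloor>)" for p :: "_ \<Rightarrow> real"
    using sum_sym_diff[OF assms, of "\<lambda>x. \<lfloor>p x\<rfloor>"] by simp
  then show ?thesis unfolding parity_val_def by auto
qed

lemma not_parity_witness_0:
  assumes "\<And>D. D \<in> M \<Longrightarrow> D \<subseteq> G"
  shows "\<not> parity_witness G M 0 p"
  using assms unfolding parity_witness_def by (force simp: subset_eq)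

lemma sum_floor_translate:
  fixes p :: "'a::cancel_ab_semigroup_add \<Rightarrow> real"
  assumes "\<And>x. x \<in> D \<Longrightarrow> p x \<in> \<int>" "\<And>x. x \<in> D \<Longrightarrow> p (x + h) \<in> \<int>"
  shows "(\<Sum>x\<in>(+) h ` D. \<lfloor>p x\<rfloor>) = (\<Sum>x\<in>D. \<lfloor>p x\<rfloor>) + (\<Sum>x\<in>D. \<lfloor>p (x + h) - p x\<rfloor>)"
proof -
  have "(\<Sum>x\<in>(+) h ` D. \<lfloor>p x\<rfloor>) = (\<Sum>x\<in>D. \<lfloor>p (x + h)\<rfloor>)"
    by (subst sum.reindex) (auto simp: inj_on_def add.commute)
  also have "\<dots> = (\<Sum>x\<in>D. \<lfloor>p x\<rfloor> + \<lfloor>p (x + h) - p x\<rfloor>)"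
  proof (rule sum.cong[OF refl])
    fix x assume "x \<in> D"
    then have "p x \<in> \<int>" "p (x + h) \<in> \<int>" using assms by auto
    then show "\<lfloor>p (x + h)\<rfloor> = \<lfloor>p x\<rfloor> + \<lfloor>p (x + h) - p x\<rfloor>" by (elim Ints_cases) simp
  qed
  finally show ?thesis by (simp add: sum.distrib)
qed

lemma parity_val_translate:
  fixes G :: "'a::cancel_ab_semigroup_add set"
  assumes G: "add_closed G" and M: "\<And>D'. D' \<in> M \<Longrightarrow> D' \<subseteq> G \<and> finite D'"
    and D: "D \<in> M" and h: "h \<in> G"
  shows "parity_val G M (sym_diff D ((+) h ` D)) = 0"
proof (cases "\<exists>k p. parity_witness G M k p")
  case False
  then show ?thesis unfolding parity_val_def by auto
next
  case True
  let ?p = "min_witness G M"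
  have DG: "D \<subseteq> G" and fin: "finite D" using M[OF D] by auto
  have wit: "parity_witness G M (min_witness_degree G M) ?p" using min_witness_is_witness[OF True] .
  then obtain k where k: "min_witness_degree G M = Suc k"
    using not_parity_witness_0[of M G ?p] M by (cases "min_witness_degree G M") auto
  have ints: "?p x \<in> \<int>" "?p (x + h) \<in> \<int>" if "x \<in> D" for x
    using wit DG h G that unfolding parity_witness_def add_closed_def by auto
  have "(\<lambda>x. ?p (x + h) - ?p x) \<in> diff_poly G k" using wit k h unfolding parity_witness_def by auto
  moreover have "\<forall>x\<in>G. ?p (x + h) - ?p x \<in> \<int>" using wit h G unfolding parity_witness_def add_closed_def by auto
  moreover have "\<not> (\<exists>p. parity_witness G M k p)"
    using not_less_Least[of k "\<lambda>k. \<exists>p. parity_witness G M k p"] k unfolding min_witness_degree_def by simp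
  ultimately have "even (\<Sum>x\<in>D. \<lfloor>?p (x + h) - ?p x\<rfloor>)" using D unfolding parity_witness_def by blast
  then have "even (\<Sum>x\<in>sym_diff D ((+) h ` D). \<lfloor>?p x\<rfloor>)"
    using sum_sym_diff[OF fin finite_imageI[OF fin], of "\<lambda>x. \<lfloor>?p x\<rfloor>"] sum_floor_translate[of D ?p h, OF ints] by simp
  then show ?thesis unfolding parity_val_def by auto
qed

lemma ex_parity_val_eq_1:
  assumes "finite B" "int_independent B"
    and M: "\<And>D'. D' \<in> M \<Longrightarrow> D' \<subseteq> int_span B \<and> finite D'"
    and D: "D \<in> M" "D \<noteq> {}"
  shows "\<exists>D'\<in>M. parity_val (int_span B) M D' = 1"
proof -
  obtain k p where p: "p \<in> diff_poly (int_span B) k" "\<forall>x\<in>int_span B. p x \<in> \<int>" "(\<Sum>x\<in>D. p x) = 1"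
    using ex_int_diff_poly_sum_eq_1[OF assms(1,2) _ _ D(2)] M[OF D(1)] by blast
  have "(\<Sum>x\<in>D. real_of_int \<lfloor>p x\<rfloor>) = (\<Sum>x\<in>D. p x)"
    using M[OF D(1)] p(2) by (intro sum.cong) (auto simp: subset_eq)
  then have "(\<Sum>x\<in>D. \<lfloor>p x\<rfloor>) = 1" using p(3) by (metis of_int_eq_1_iff of_int_sum)
  then have "parity_witness (int_span B) M k p"
    unfolding parity_witness_def using p(1,2) D(1) by (intro conjI bexI[of _ D]) auto
  then have ex: "\<exists>k p. parity_witness (int_span B) M k p" by blast
  then obtain D' where "D' \<in> M" "odd (\<Sum>x\<in>D'. \<lfloor>min_witness (int_span B) M x\<rfloor>)"
    using min_witness_is_witness[OF ex] unfolding parity_witness_def by auto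
  then show ?thesis unfolding parity_val_def using ex by auto
qed

section \<open>Sectors at a point and germs of cell-constant functions\<close>

definition biorthogonal :: "(nat \<Rightarrow> 'v::euclidean_space) \<Rightarrow> (nat \<Rightarrow> 'v) \<Rightarrow> bool" where
  "biorthogonal u w \<longleftrightarrow> (\<forall>i<DIM('v). \<forall>k<DIM('v). w i \<bullet> u k = (if i = k then 1 else 0)) \<and>
      (\<forall>x. x = (\<Sum>k<DIM('v). (w k \<bullet> x) *\<^sub>R u k))"

lemma biorthogonal_inner:
  assumes "biorthogonal u (w :: nat \<Rightarrow> 'v::euclidean_space)" "i < DIM('v)" "k < DIM('v)"
  shows "w i \<bullet> u k = (if i = k then 1 else (0::real))" using assms unfolding biorthogonal_def by auto

lemma biorthogonal_expansion:
  assumes "biorthogonal u (w :: nat \<Rightarrow> 'v::euclidean_space)"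
  shows "x = (\<Sum>k<DIM('v). (w k \<bullet> x) *\<^sub>R u k)" using assms unfolding biorthogonal_def by auto

lemma biorthogonal_coord_sum:
  assumes "biorthogonal u (w :: nat \<Rightarrow> 'v::euclidean_space)" "i < DIM('v)"
  shows "w i \<bullet> (\<Sum>k<DIM('v). c k *\<^sub>R u k) = c i"
proof -
  have "w i \<bullet> (\<Sum>k<DIM('v). c k *\<^sub>R u k) = (\<Sum>k<DIM('v). c k * (w i \<bullet> u k))"
    by (simp add: inner_sum_right)
  also have "\<dots> = (\<Sum>k<DIM('v). if k = i then c k else 0)"
    using biorthogonal_inner[OF assms(1) assms(2)] by (intro sum.cong) auto
  also have "\<dots> = c i" using assms(2) by simp
  finally show ?thesis .
qed

lemma inner_biorthogonal_expansion:
  assumes "biorthogonal u (w :: nat \<Rightarrow> 'v::euclidean_space)"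
  shows "a \<bullet> y = (\<Sum>k<DIM('v). (w k \<bullet> y) * (a \<bullet> u k))"
  by (subst biorthogonal_expansion[OF assms, of y]) (simp add: inner_sum_right)

text \<open>As \<open>d \<rightarrow> 0\<close> the \<open>2\<^sup>m\<close> sectors at \<open>p\<close>, one for each sign pattern \<open>s\<close>, shrink to \<open>p\<close> while
  clinging to the flag spanned by \<open>u\<^sub>0\<close>, then \<open>u\<^sub>0, u\<^sub>1\<close>, and so on.\<close>

definition sector_sign :: "nat set \<Rightarrow> nat \<Rightarrow> real" where
  "sector_sign s k = (if k \<in> s then 1 else -1)"

definition sector :: "'v::euclidean_space \<Rightarrow> (nat \<Rightarrow> 'v) \<Rightarrow> nat set \<Rightarrow> real \<Rightarrow> 'v set" where
  "sector p w s d = {x. \<forall>k<DIM('v). 0 < sector_sign s k * (w k \<bullet> (x - p)) \<and>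
      sector_sign s k * (w k \<bullet> (x - p)) < (if k = 0 then d else d * (sector_sign s (k - 1) * (w (k - 1) \<bullet> (x - p))))}"

lemma sector_sign_sign: "sector_sign s k * (sector_sign s k * y) = y" unfolding sector_sign_def by auto

lemma abs_eq_sector_sign: "0 < sector_sign s k * y \<Longrightarrow> \<bar>y\<bar> = sector_sign s k * y"
  unfolding sector_sign_def by (auto split: if_splits)

lemma sector_abs_coord:
  fixes p :: "'v::euclidean_space"
  assumes "x \<in> sector p w s d" "k < DIM('v)"
  shows "\<bar>w k \<bullet> (x - p)\<bar> = sector_sign s k * (w k \<bullet> (x - p))" "0 < \<bar>w k \<bullet> (x - p)\<bar>"
  using assms abs_eq_sector_sign unfolding sector_def by force+

lemma sector_coord_step:
  fixes p :: "'v::euclidean_space"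
  assumes "x \<in> sector p w s d" "k < DIM('v)" "0 < k"
  shows "\<bar>w k \<bullet> (x - p)\<bar> < d * \<bar>w (k - 1) \<bullet> (x - p)\<bar>"
proof -
  have "\<bar>w k \<bullet> (x - p)\<bar> = sector_sign s k * (w k \<bullet> (x - p))" using sector_abs_coord assms by blast
  moreover have "\<bar>w (k-1) \<bullet> (x - p)\<bar> = sector_sign s (k-1) * (w (k-1) \<bullet> (x - p))"
    using sector_abs_coord[OF assms(1), of "k-1"] assms by simp
  ultimately show ?thesis using assms unfolding sector_def by auto
qed

lemma sector_coord_0:
  fixes p :: "'v::euclidean_space"
  assumes "x \<in> sector p w s d"
  shows "\<bar>w 0 \<bullet> (x - p)\<bar> < d"
  using assms sector_abs_coord[OF assms(1), of 0] DIM_positive[where 'a='v] unfolding sector_def by (auto dest: spec[of _ 0])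

lemma sector_coord_less:
  fixes p :: "'v::euclidean_space"
  assumes "x \<in> sector p w s d" "d \<le> 1" "k < DIM('v)"
  shows "\<bar>w k \<bullet> (x - p)\<bar> < d"
  using assms(3)
proof (induction k)
  case 0
  then show ?case using sector_coord_0[OF assms(1)] by simp
next
  case (Suc k)
  have "\<bar>w (Suc k) \<bullet> (x - p)\<bar> < d * \<bar>w k \<bullet> (x - p)\<bar>" using sector_coord_step[OF assms(1) Suc.prems] by simp
  also have "\<dots> \<le> 1 * \<bar>w k \<bullet> (x - p)\<bar>" using assms(2) by (intro mult_right_mono) auto
  also have "\<dots> < d" using Suc by simp
  finally show ?case .
qed

lemma sector_coord_decay:
  fixes p :: "'v::euclidean_space"
  assumes "x \<in> sector p w s d" "d \<le> 1" "0 < d"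
  shows "k0 < k \<Longrightarrow> k < DIM('v) \<Longrightarrow> \<bar>w k \<bullet> (x - p)\<bar> \<le> d * \<bar>w k0 \<bullet> (x - p)\<bar>"
proof (induction k)
  case 0
  then show ?case by simp
next
  case (Suc k)
  have st: "\<bar>w (Suc k) \<bullet> (x - p)\<bar> < d * \<bar>w k \<bullet> (x - p)\<bar>" using sector_coord_step[OF assms(1) Suc.prems(2)] by simp
  show ?case
  proof (cases "k0 = k")
    case True
    then show ?thesis using st by simp
  next
    case False
    then have "\<bar>w k \<bullet> (x - p)\<bar> \<le> d * \<bar>w k0 \<bullet> (x - p)\<bar>" using Suc by simp
    moreover have "d * \<bar>w k \<bullet> (x - p)\<bar> \<le> 1 * \<bar>w k \<bullet> (x - p)\<bar>"
      using assms(2) by (intro mult_right_mono) auto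
    ultimately show ?thesis using st by linarith
  qed
qed

lemma sector_mono:
  fixes p :: "'v::euclidean_space"
  assumes "d1 \<le> d2"
  shows "sector p w s d1 \<subseteq> sector p w s d2"
proof
  fix x assume x: "x \<in> sector p w s d1"
  have "sector_sign s k * (w k \<bullet> (x - p)) < (if k = 0 then d2 else d2 * (sector_sign s (k - 1) * (w (k - 1) \<bullet> (x - p))))"
    if k: "k < DIM('v)" for k
  proof (cases "k = 0")
    case True
    then show ?thesis using x k assms unfolding sector_def by (auto dest: spec[of _ 0])
  next
    case False
    have "0 < sector_sign s (k - 1) * (w (k - 1) \<bullet> (x - p))" using x k unfolding sector_def by auto
    then have "d1 * (sector_sign s (k - 1) * (w (k - 1) \<bullet> (x - p))) \<le> d2 * (sector_sign s (k - 1) * (w (k - 1) \<bullet> (x - p)))"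
      using assms by (intro mult_right_mono) auto
    then show ?thesis using x k False unfolding sector_def by force
  qed
  then show "x \<in> sector p w s d2" using x unfolding sector_def by auto
qed

lemma open_sector: "open (sector (p::'v::euclidean_space) w s d)"
proof -
  define P where "P k x \<longleftrightarrow> 0 < sector_sign s k * (w k \<bullet> (x - p)) \<and>
      sector_sign s k * (w k \<bullet> (x - p)) < (if k = 0 then d else d * (sector_sign s (k - 1) * (w (k - 1) \<bullet> (x - p))))" for k x
  have "sector p w s d = {x. \<forall>k\<in>{..<DIM('v)}. P k x}" unfolding sector_def P_def Ball_def lessThan_iff ..
  also have "\<dots> = (\<Inter>k\<in>{..<DIM('v)}. {x. P k x})" by blast
  also have "open \<dots>"
  proof (intro open_INT finite_lessThan ballI)
    fix k
    show "open {x. P k x}"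
      unfolding P_def by (cases "k = 0"; simp; intro open_Collect_conj open_Collect_less continuous_intros)
  qed
  finally show ?thesis .
qed

lemma sector_nonempty:
  assumes "biorthogonal u (w :: nat \<Rightarrow> 'v::euclidean_space)" "0 < d"
  shows "sector p w s d \<noteq> {}"
proof -
  define x where "x = p + (\<Sum>k<DIM('v). (sector_sign s k * (d/2)^(Suc k)) *\<^sub>R u k)"
  have c: "w k \<bullet> (x - p) = sector_sign s k * (d/2)^(Suc k)" if "k < DIM('v)" for k
    unfolding x_def using biorthogonal_coord_sum[OF assms(1) that] by simp
  have sq: "0 < sector_sign s k * (sector_sign s k * y)" if "0 < y" for k y using that unfolding sector_sign_def by auto
  have "x \<in> sector p w s d"
    unfolding sector_def
  proof (intro CollectI allI impI conjI)
    fix k assume k: "k < DIM('v)"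
    show "0 < sector_sign s k * (w k \<bullet> (x - p))" unfolding c[OF k] using assms(2) by (intro sq) simp
    show "sector_sign s k * (w k \<bullet> (x - p)) < (if k = 0 then d else d * (sector_sign s (k - 1) * (w (k - 1) \<bullet> (x - p))))"
    proof (cases k)
      case 0
      then show ?thesis using c[OF k] assms(2) unfolding sector_sign_def by auto
    next
      case (Suc k')
      have "(d/2)^(Suc (Suc k')) < d * (d/2)^(Suc k')"
        using assms(2) by (simp add: power_Suc[of "d/2" "Suc k'"] mult_strict_right_mono del: power_Suc)
      have k1: "k - 1 < DIM('v)" using k by simp
      have e1: "sector_sign s k * (w k \<bullet> (x - p)) = (d/2)^(Suc k)" by (simp only: c[OF k] sector_sign_sign)
      have e2: "sector_sign s (k-1) * (w (k-1) \<bullet> (x - p)) = (d/2)^(Suc (k-1))" by (simp only: c[OF k1] sector_sign_sign)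
      have "k \<noteq> 0" using Suc by simp
      then show ?thesis unfolding e1 e2 if_not_P[OF \<open>k \<noteq> 0\<close>]
        using Suc \<open>(d/2)^(Suc (Suc k')) < d * (d/2)^(Suc k')\<close> by (simp del: power_Suc)
    qed
  qed
  then show ?thesis by auto
qed

definition first_nonzero :: "'v::euclidean_space \<Rightarrow> (nat \<Rightarrow> 'v) \<Rightarrow> nat" where
  "first_nonzero a u = (LEAST k. a \<bullet> u k \<noteq> 0)"

text \<open>The side of the hyperplane \<open>a \<bullet> x = b\<close> on which all small sectors at \<open>p\<close> lie.\<close>

definition sector_side :: "'v::euclidean_space \<Rightarrow> real \<Rightarrow> 'v \<Rightarrow> (nat \<Rightarrow> 'v) \<Rightarrow> nat set \<Rightarrow> bool" where
  "sector_side a b p u s = (if a \<bullet> p \<noteq> b then a \<bullet> p < b else sector_sign s (first_nonzero a u) * (a \<bullet> u (first_nonzero a u)) < 0)"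

lemma first_nonzero:
  assumes "biorthogonal u (w :: nat \<Rightarrow> 'v::euclidean_space)" "a \<noteq> 0"
  shows "first_nonzero a u < DIM('v)" "a \<bullet> u (first_nonzero a u) \<noteq> 0" "\<And>k. k < first_nonzero a u \<Longrightarrow> a \<bullet> u k = 0"
proof -
  have ex: "\<exists>k<DIM('v). a \<bullet> u k \<noteq> 0"
  proof (rule ccontr)
    assume "\<not> ?thesis"
    then have "\<forall>k<DIM('v). a \<bullet> u k = 0" by auto
    moreover have "a \<bullet> a = (\<Sum>k<DIM('v). (w k \<bullet> a) * (a \<bullet> u k))"
      by (subst (2) biorthogonal_expansion[OF assms(1), of a]) (simp add: inner_sum_right)
    ultimately have "a \<bullet> a = 0" by simp
    then show False using assms(2) by simp
  qed
  then obtain k where k: "k < DIM('v)" "a \<bullet> u k \<noteq> 0" by blast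
  show "a \<bullet> u (first_nonzero a u) \<noteq> 0" unfolding first_nonzero_def using LeastI[of "\<lambda>k. a \<bullet> u k \<noteq> 0" k] k(2) by simp
  have "first_nonzero a u \<le> k" unfolding first_nonzero_def using k by (intro Least_le) 
  then show "first_nonzero a u < DIM('v)" using k by simp
  show "\<And>k. k < first_nonzero a u \<Longrightarrow> a \<bullet> u k = 0" unfolding first_nonzero_def using not_less_Least by blast
qed

lemma ex_small_factor:
  fixes e N :: real
  assumes "0 < e" "0 \<le> N"
  obtains d where "0 < d" "d \<le> 1" "d * N < e"
proof
  let ?d = "min 1 (e / (N + 1))"
  show "0 < ?d" "?d \<le> 1" using assms by auto
  have "?d * N \<le> e / (N + 1) * N" using assms by (intro mult_right_mono) auto
  also have "\<dots> < e" using assms by (simp add: field_simps)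
  finally show "?d * N < e" .
qed

lemma sector_side_off_hyperplane:
  assumes bi: "biorthogonal u (w :: nat \<Rightarrow> 'v::euclidean_space)" and off: "a \<bullet> p \<noteq> b"
  shows "\<exists>d>0. \<forall>x\<in>sector p w s d. a \<bullet> x \<le> b \<longleftrightarrow> a \<bullet> p < b"
proof -
  define N where "N = (\<Sum>k<DIM('v). \<bar>a \<bullet> u k\<bar>)"
  obtain d where d: "0 < d" "d \<le> 1" "d * N < \<bar>a \<bullet> p - b\<bar>"
    using ex_small_factor[of "\<bar>a \<bullet> p - b\<bar>" N] off unfolding N_def by (auto intro: sum_nonneg)
  have "a \<bullet> x \<le> b \<longleftrightarrow> a \<bullet> p < b" if x: "x \<in> sector p w s d" for x
  proof -
    have "\<bar>a \<bullet> (x - p)\<bar> = \<bar>\<Sum>k<DIM('v). (w k \<bullet> (x - p)) * (a \<bullet> u k)\<bar>"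
      by (simp only: inner_biorthogonal_expansion[OF bi, of a "x - p"])
    also have "\<dots> \<le> (\<Sum>k<DIM('v). \<bar>(w k \<bullet> (x - p)) * (a \<bullet> u k)\<bar>)"
      by (rule sum_abs)
    also have "\<dots> \<le> (\<Sum>k<DIM('v). d * \<bar>a \<bullet> u k\<bar>)"
    proof (rule sum_mono)
      fix k assume "k \<in> {..<DIM('v)}"
      then have "\<bar>w k \<bullet> (x - p)\<bar> \<le> d" using sector_coord_less[OF x d(2)] by (simp add: less_imp_le)
      then show "\<bar>(w k \<bullet> (x - p)) * (a \<bullet> u k)\<bar> \<le> d * \<bar>a \<bullet> u k\<bar>"
        by (simp add: abs_mult mult_right_mono)
    qed
    also have "\<dots> < \<bar>a \<bullet> p - b\<bar>" using d(3) unfolding N_def by (simp add: sum_distrib_left)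
    finally show ?thesis by (simp add: inner_diff_right) arith
  qed
  then show ?thesis using d(1) by blast
qed

text \<open>The terms before \<open>k\<^sub>0\<close> vanish and the later sector coordinates are smaller than the
  \<open>k\<^sub>0\<close>-th one by a factor \<open>d\<close>.\<close>

lemma sector_leading_term:
  fixes p :: "'v::euclidean_space"
  assumes x: "x \<in> sector p w s d" and d: "0 < d" "d \<le> 1" and k0: "k0 < DIM('v)"
    and zero: "\<And>k. k < k0 \<Longrightarrow> b k = 0" and small: "d * (\<Sum>k<DIM('v). \<bar>b k\<bar>) < \<bar>b k0\<bar>"
  shows "\<bar>\<Sum>k\<in>{..<DIM('v)} - {k0}. (w k \<bullet> (x - p)) * b k\<bar> < \<bar>(w k0 \<bullet> (x - p)) * b k0\<bar>"
proof -
  define t where "t k = w k \<bullet> (x - p)" for k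
  have t0: "\<bar>t k0\<bar> > 0" using sector_abs_coord[OF x k0] unfolding t_def by simp
  have "\<bar>\<Sum>k\<in>{..<DIM('v)} - {k0}. t k * b k\<bar> \<le> (\<Sum>k\<in>{..<DIM('v)} - {k0}. \<bar>t k * b k\<bar>)"
    by (rule sum_abs)
  also have "\<dots> \<le> (\<Sum>k\<in>{..<DIM('v)} - {k0}. d * \<bar>t k0\<bar> * \<bar>b k\<bar>)"
  proof (rule sum_mono)
    fix k assume k: "k \<in> {..<DIM('v)} - {k0}"
    show "\<bar>t k * b k\<bar> \<le> d * \<bar>t k0\<bar> * \<bar>b k\<bar>"
    proof (cases "k < k0")
      case True
      then show ?thesis using zero by simp
    next
      case False
      then have "\<bar>t k\<bar> \<le> d * \<bar>t k0\<bar>" using sector_coord_decay[OF x d(2,1)] k unfolding t_def by auto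
      then show ?thesis by (simp add: abs_mult mult_right_mono)
    qed
  qed
  also have "\<dots> \<le> (\<Sum>k<DIM('v). d * \<bar>t k0\<bar> * \<bar>b k\<bar>)"
    by (rule sum_mono2) (use d in auto)
  also have "\<dots> = \<bar>t k0\<bar> * (d * (\<Sum>k<DIM('v). \<bar>b k\<bar>))" by (simp add: sum_distrib_left mult_ac)
  also have "\<dots> < \<bar>t k0 * b k0\<bar>" using t0 small by (simp add: abs_mult)
  finally show ?thesis unfolding t_def .
qed

lemma sector_side_on_hyperplane:
  assumes bi: "biorthogonal u (w :: nat \<Rightarrow> 'v::euclidean_space)" and a: "a \<noteq> 0" and on: "a \<bullet> p = b"
  shows "\<exists>d>0. \<forall>x\<in>sector p w s d.
           a \<bullet> x \<le> b \<longleftrightarrow> sector_sign s (first_nonzero a u) * (a \<bullet> u (first_nonzero a u)) < 0"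
proof -
  define k0 where "k0 = first_nonzero a u"
  have k0: "k0 < DIM('v)" "a \<bullet> u k0 \<noteq> 0" "\<And>k. k < k0 \<Longrightarrow> a \<bullet> u k = 0"
    using first_nonzero[OF bi a] unfolding k0_def by auto
  obtain d where d: "0 < d" "d \<le> 1" "d * (\<Sum>k<DIM('v). \<bar>a \<bullet> u k\<bar>) < \<bar>a \<bullet> u k0\<bar>"
    using ex_small_factor[of "\<bar>a \<bullet> u k0\<bar>" "\<Sum>k<DIM('v). \<bar>a \<bullet> u k\<bar>"] k0(2) by (auto intro: sum_nonneg)
  have "a \<bullet> x \<le> b \<longleftrightarrow> sector_sign s k0 * (a \<bullet> u k0) < 0" if x: "x \<in> sector p w s d" for x
  proof -
    define t where "t k = w k \<bullet> (x - p)" for k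
    have t0: "\<bar>t k0\<bar> > 0" using sector_abs_coord[OF x k0(1)] unfolding t_def by simp
    have t_sign: "t k0 = sector_sign s k0 * \<bar>t k0\<bar>"
      using sector_abs_coord(1)[OF x k0(1)] sector_sign_sign[of s k0 "t k0"] unfolding t_def by simp
    have "a \<bullet> x - b = (\<Sum>k<DIM('v). t k * (a \<bullet> u k))"
      using inner_biorthogonal_expansion[OF bi, of a "x - p"] on unfolding t_def by (simp add: inner_diff_right)
    also have "\<dots> = t k0 * (a \<bullet> u k0) + (\<Sum>k\<in>{..<DIM('v)} - {k0}. t k * (a \<bullet> u k))"
      using k0(1) by (simp add: sum.remove)
    finally have "a \<bullet> x \<le> b \<longleftrightarrow> t k0 * (a \<bullet> u k0) < 0"
      using sector_leading_term[OF x d(1,2) k0(1,3) d(3)] unfolding t_def by (auto simp: abs_if split: if_splits)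
    also have "\<dots> \<longleftrightarrow> \<bar>t k0\<bar> * (sector_sign s k0 * (a \<bullet> u k0)) < 0"
      by (subst t_sign) (simp add: mult_ac)
    also have "\<dots> \<longleftrightarrow> sector_sign s k0 * (a \<bullet> u k0) < 0" using t0 by (simp add: mult_less_0_iff)
    finally show ?thesis .
  qed
  then show ?thesis using d(1) unfolding k0_def by blast
qed

lemma sector_side:
  assumes "biorthogonal u (w :: nat \<Rightarrow> 'v::euclidean_space)" "a \<noteq> 0"
  shows "\<exists>d>0. \<forall>x\<in>sector p w s d. a \<bullet> x \<le> b \<longleftrightarrow> sector_side a b p u s"
  using sector_side_off_hyperplane[OF assms(1)] sector_side_on_hyperplane[OF assms]
  unfolding sector_side_def by (cases "a \<bullet> p = b") auto
definition has_germ :: "'v::euclidean_space set set \<Rightarrow> ('v \<Rightarrow> int) \<Rightarrow> 'v \<Rightarrow> (nat \<Rightarrow> 'v) \<Rightarrow> nat set \<Rightarrow> int \<Rightarrow> bool" where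
  "has_germ C f p w s c \<longleftrightarrow> (\<exists>d>0. \<forall>x\<in>sector p w s d \<inter> V' C. f x = c)"

definition germ :: "'v::euclidean_space set set \<Rightarrow> ('v \<Rightarrow> int) \<Rightarrow> 'v \<Rightarrow> (nat \<Rightarrow> 'v) \<Rightarrow> nat set \<Rightarrow> int" where
  "germ C f p w s = (THE c. has_germ C f p w s c)"

definition cell_constant :: "'v::euclidean_space set set \<Rightarrow> ('v \<Rightarrow> int) \<Rightarrow> ('v \<times> real) set \<Rightarrow> bool" where
  "cell_constant C f A \<longleftrightarrow> finite A \<and> (\<forall>(a,b)\<in>A. a \<noteq> 0) \<and>
     (\<forall>x\<in>V' C. \<forall>y\<in>V' C. (\<forall>(a,b)\<in>A. (a \<bullet> x \<le> b) = (a \<bullet> y \<le> b)) \<longrightarrow> f x = f y)"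

definition countable_hyperplanes :: "'v::euclidean_space set set \<Rightarrow> bool" where
  "countable_hyperplanes C \<longleftrightarrow> (\<forall>H\<in>C. affine_hyperplane H) \<and> countable C"

lemma open_Int_V'_nonempty:
  assumes "countable_hyperplanes C" "open S" "S \<noteq> {}"
  shows "S \<inter> V' C \<noteq> {}"
proof
  assume "S \<inter> V' C = {}"
  then have sub: "S \<subseteq> \<Union>C" unfolding V'_def by auto
  have "negligible (\<Union>C)"
  proof (rule negligible_countable_Union)
    show "countable C" using assms(1) unfolding countable_hyperplanes_def by auto
    fix H assume "H \<in> C"
    then obtain a b where "a \<noteq> 0" "H = {x. a \<bullet> x = b}"
      using assms(1) unfolding countable_hyperplanes_def affine_hyperplane_def by blast
    then show "negligible H" using negligible_hyperplane by blast
  qed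
  then have "negligible S" using sub negligible_subset by blast
  then show False using open_not_negligible assms by blast
qed

lemma sector_Int_V'_nonempty:
  assumes "countable_hyperplanes C" "biorthogonal u (w :: nat \<Rightarrow> 'v::euclidean_space)" "0 < d"
  shows "sector p w s d \<inter> V' C \<noteq> {}"
  using open_Int_V'_nonempty[OF assms(1) open_sector sector_nonempty[OF assms(2,3)]] .

lemma has_germ_unique:
  assumes "countable_hyperplanes C" "biorthogonal u (w :: nat \<Rightarrow> 'v::euclidean_space)" "has_germ C f p w s c1" "has_germ C f p w s c2"
  shows "c1 = c2"
proof -
  obtain d1 where d1: "d1 > 0" "\<forall>x\<in>sector p w s d1 \<inter> V' C. f x = c1" using assms(3) unfolding has_germ_def by auto
  obtain d2 where d2: "d2 > 0" "\<forall>x\<in>sector p w s d2 \<inter> V' C. f x = c2" using assms(4) unfolding has_germ_def by auto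
  obtain x where x: "x \<in> sector p w s (min d1 d2) \<inter> V' C" using sector_Int_V'_nonempty[OF assms(1,2), of "min d1 d2" p s] d1 d2 by auto
  have s1: "sector p w s (min d1 d2) \<subseteq> sector p w s d1" and s2: "sector p w s (min d1 d2) \<subseteq> sector p w s d2"
    by (rule sector_mono, simp)+
  have "f x = c1" using x s1 d1(2) by blast
  moreover have "f x = c2" using x s2 d2(2) by blast
  ultimately show ?thesis by simp
qed

lemma germ_eqI:
  assumes "countable_hyperplanes C" "biorthogonal u (w :: nat \<Rightarrow> 'v::euclidean_space)" "has_germ C f p w s c"
  shows "germ C f p w s = c"
  unfolding germ_def using has_germ_unique[OF assms(1,2)] assms(3) by blast

lemma has_germ_binop:
  assumes "has_germ C f p w s c1" "has_germ C g p w s c2"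
  shows "has_germ C (\<lambda>x. F (f x) (g x)) p w s (F c1 c2)"
proof -
  obtain d1 where d1: "d1 > 0" "\<forall>x\<in>sector p w s d1 \<inter> V' C. f x = c1" using assms(1) unfolding has_germ_def by auto
  obtain d2 where d2: "d2 > 0" "\<forall>x\<in>sector p w s d2 \<inter> V' C. g x = c2" using assms(2) unfolding has_germ_def by auto
  have s1: "sector p w s (min d1 d2) \<subseteq> sector p w s d1" and s2: "sector p w s (min d1 d2) \<subseteq> sector p w s d2"
    by (rule sector_mono, simp)+
  have "\<forall>x\<in>sector p w s (min d1 d2) \<inter> V' C. F (f x) (g x) = F c1 c2"
  proof
    fix x assume x: "x \<in> sector p w s (min d1 d2) \<inter> V' C"
    then have "f x = c1" using d1(2) s1 by blast
    moreover have "g x = c2" using x d2(2) s2 by blast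
    ultimately show "F (f x) (g x) = F c1 c2" by simp
  qed
  then show ?thesis unfolding has_germ_def using d1 d2 by (intro exI[of _ "min d1 d2"]) auto
qed

lemma sector_side_cell:
  assumes bi: "biorthogonal u (w :: nat \<Rightarrow> 'v::euclidean_space)" and fin: "finite A" and nz: "\<forall>(a,b)\<in>A. a \<noteq> 0"
  shows "\<exists>d>0. \<forall>x\<in>sector p w s d. \<forall>(a,b)\<in>A. (a \<bullet> x \<le> b) = sector_side a b p u s"
  using fin nz
proof (induction A rule: finite_induct)
  case empty
  then show ?case by (intro exI[of _ 1]) auto
next
  case (insert ab A)
  obtain a b where ab: "ab = (a, b)" by fastforce
  obtain d1 where d1: "d1 > 0" "\<forall>x\<in>sector p w s d1. \<forall>(a,b)\<in>A. (a \<bullet> x \<le> b) = sector_side a b p u s"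
    using insert by auto
  have "a \<noteq> 0" using insert.prems ab by auto
  from sector_side[OF bi this, of p s b] obtain d2 where
    d2: "d2 > 0" "\<forall>x\<in>sector p w s d2. (a \<bullet> x \<le> b) = sector_side a b p u s"
    by blast
  have s1: "sector p w s (min d1 d2) \<subseteq> sector p w s d1" and s2: "sector p w s (min d1 d2) \<subseteq> sector p w s d2"
    by (rule sector_mono, simp)+
  have "\<forall>x\<in>sector p w s (min d1 d2). \<forall>(a',b')\<in>insert ab A. (a' \<bullet> x \<le> b') = sector_side a' b' p u s"
  proof (intro ballI, clarify)
    fix x a' b' assume x: "x \<in> sector p w s (min d1 d2)" and ab': "(a', b') \<in> insert ab A"
    show "(a' \<bullet> x \<le> b') = sector_side a' b' p u s"
    proof (cases "(a', b') = ab")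
      case True
      then show ?thesis using d2(2) x s2 ab by auto
    next
      case False
      then have "(a', b') \<in> A" using ab' by auto
      moreover have "x \<in> sector p w s d1" using x s1 by blast
      ultimately show ?thesis using d1(2) by auto
    qed
  qed
  then show ?case using d1(1) d2(1) by (intro exI[of _ "min d1 d2"]) auto
qed

lemma cell_constant_germ:
  assumes gC: "countable_hyperplanes C" and bi: "biorthogonal u (w :: nat \<Rightarrow> 'v::euclidean_space)" and cc: "cell_constant C f A"
  shows "\<exists>d>0. \<forall>x\<in>sector p w s d \<inter> V' C. (\<forall>(a,b)\<in>A. (a \<bullet> x \<le> b) = sector_side a b p u s) \<and> f x = germ C f p w s"
proof -
  have fA: "finite A" and nzA: "\<forall>(a,b)\<in>A. a \<noteq> 0" using cc unfolding cell_constant_def by auto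
  obtain d where d: "d > 0" "\<forall>x\<in>sector p w s d. \<forall>(a,b)\<in>A. (a \<bullet> x \<le> b) = sector_side a b p u s"
    using sector_side_cell[OF bi fA nzA] by blast
  obtain x0 where x0: "x0 \<in> sector p w s d \<inter> V' C" using sector_Int_V'_nonempty[OF gC bi d(1)] by auto
  have eq: "f x = f x0" if "x \<in> sector p w s d \<inter> V' C" for x
  proof -
    have hx: "\<forall>(a,b)\<in>A. (a \<bullet> x \<le> b) = sector_side a b p u s" using d(2) that by blast
    have hx0: "\<forall>(a,b)\<in>A. (a \<bullet> x0 \<le> b) = sector_side a b p u s" using d(2) x0 by blast
    have "\<forall>(a,b)\<in>A. (a \<bullet> x \<le> b) = (a \<bullet> x0 \<le> b)"
    proof (intro ballI, clarify)
      fix a b assume ab: "(a, b) \<in> A"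
      have "(a \<bullet> x \<le> b) = sector_side a b p u s" using hx ab by auto
      moreover have "(a \<bullet> x0 \<le> b) = sector_side a b p u s" using hx0 ab by auto
      ultimately show "(a \<bullet> x \<le> b) = (a \<bullet> x0 \<le> b)" by simp
    qed
    then show ?thesis using cc that x0 unfolding cell_constant_def by blast
  qed
  then have "has_germ C f p w s (f x0)" unfolding has_germ_def using d(1) by blast
  then have "germ C f p w s = f x0" by (rule germ_eqI[OF gC bi])
  then show ?thesis using d eq by (intro exI[of _ d]) auto
qed

lemma cell_constant_has_germ:
  assumes gC: "countable_hyperplanes C" and bi: "biorthogonal u (w :: nat \<Rightarrow> 'v::euclidean_space)" and cc: "cell_constant C f A"
  shows "has_germ C f p w s (germ C f p w s)"
  using cell_constant_germ[OF assms, of p s] unfolding has_germ_def by blast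

definition arrangement_vertices :: "('v::euclidean_space \<times> real) set \<Rightarrow> 'v set" where
  "arrangement_vertices A = {p. \<exists>Bs\<subseteq>A. \<Inter>((\<lambda>(a,b). {x. a \<bullet> x = b}) ` Bs) = {p}}"

lemma finite_arrangement_vertices: "finite A \<Longrightarrow> finite (arrangement_vertices A)"
proof -
  assume "finite A"
  have "arrangement_vertices A \<subseteq> (\<lambda>Bs. the_elem (\<Inter>((\<lambda>(a,b). {x. a \<bullet> x = b}) ` Bs))) ` Pow A"
  proof
    fix p assume "p \<in> arrangement_vertices A"
    then obtain Bs where "Bs \<subseteq> A" "\<Inter>((\<lambda>(a,b). {x. a \<bullet> x = b}) ` Bs) = {p}" unfolding arrangement_vertices_def by blast
    then show "p \<in> (\<lambda>Bs. the_elem (\<Inter>((\<lambda>(a,b). {x. a \<bullet> x = b}) ` Bs))) ` Pow A"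
      by (intro image_eqI[of _ _ Bs]) auto
  qed
  then show ?thesis using \<open>finite A\<close> by (meson finite_Pow_iff finite_imageI finite_subset)
qed

lemma even_sum_Pow_if_insert_invariant:
  fixes g :: "'a set \<Rightarrow> int"
  assumes "finite I" "j \<in> I" "\<And>s. s \<subseteq> I - {j} \<Longrightarrow> g (insert j s) = g s"
  shows "even (\<Sum>s\<in>Pow I. g s)"
proof -
  have I: "I = insert j (I - {j})" using assms(2) by auto
  have "Pow I = Pow (I - {j}) \<union> insert j ` Pow (I - {j})" by (subst I) (rule Pow_insert)
  then have "(\<Sum>s\<in>Pow I. g s) = (\<Sum>s\<in>Pow (I - {j}). g s) + (\<Sum>s\<in>insert j ` Pow (I - {j}). g s)"
    using assms(1) by (simp add: sum.union_disjoint, subst sum.union_disjoint) auto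
  also have "(\<Sum>s\<in>insert j ` Pow (I - {j}). g s) = (\<Sum>s\<in>Pow (I - {j}). g (insert j s))"
    by (rule sum.reindex_cong[where l="insert j"]) (auto simp: inj_on_def)
  also have "\<dots> = (\<Sum>s\<in>Pow (I - {j}). g s)" using assms(3) by (intro sum.cong) auto
  finally show ?thesis by simp
qed


lemma sector_sign_insert: "k \<noteq> j \<Longrightarrow> sector_sign (insert j s) k = sector_sign s k"
  unfolding sector_sign_def by auto

text \<open>If \<open>p\<close> is not a vertex, some line through \<open>p\<close> lies in all hyperplanes of \<open>A\<close> through \<open>p\<close>;
  the last frame coordinate \<open>j\<close> of its direction \<open>z\<close> is then not the first nonzero index of any
  of their normals \<open>a\<close>, because \<open>a \<bullet> z\<close> would reduce to its single nonzero term of index \<open>j\<close>.\<close>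

lemma ex_frame_index_off_hyperplanes:
  assumes bi: "biorthogonal u (w :: nat \<Rightarrow> 'v::euclidean_space)" and nz: "\<forall>(a,b)\<in>A. a \<noteq> 0"
    and nv: "p \<notin> arrangement_vertices A"
  shows "\<exists>j<DIM('v). \<forall>(a,b)\<in>A. a \<bullet> p = b \<longrightarrow> first_nonzero a u \<noteq> j"
proof -
  define Bs where "Bs = {(a,b). (a,b) \<in> A \<and> a \<bullet> p = b}"
  have "p \<in> \<Inter>((\<lambda>(a,b). {x. a \<bullet> x = b}) ` Bs)" "Bs \<subseteq> A" unfolding Bs_def by auto
  then obtain q where q: "q \<in> \<Inter>((\<lambda>(a,b). {x. a \<bullet> x = b}) ` Bs)" "q \<noteq> p"
    using nv unfolding arrangement_vertices_def by blast
  define z where "z = q - p"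
  have az: "a \<bullet> z = 0" if "(a,b) \<in> A" "a \<bullet> p = b" for a b
    using q(1) that unfolding z_def Bs_def by (force simp: inner_diff_right)
  define K where "K = {k. k < DIM('v) \<and> w k \<bullet> z \<noteq> 0}"
  have "K \<noteq> {}"
  proof
    assume "K = {}"
    then have "z = 0" by (subst biorthogonal_expansion[OF bi]) (simp add: K_def)
    then show False using q(2) unfolding z_def by simp
  qed
  moreover have "finite K" unfolding K_def by auto
  ultimately have "Max K \<in> K" "\<And>k. k \<in> K \<Longrightarrow> k \<le> Max K" by auto
  then have j: "Max K < DIM('v)" "w (Max K) \<bullet> z \<noteq> 0" "\<And>k. k < DIM('v) \<Longrightarrow> Max K < k \<Longrightarrow> w k \<bullet> z = 0"
    unfolding K_def by (auto simp: not_le[symmetric])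
  have "first_nonzero a u \<noteq> Max K" if ab: "(a,b) \<in> A" "a \<bullet> p = b" for a b
  proof
    assume first: "first_nonzero a u = Max K"
    have a0: "a \<noteq> 0" using nz ab by auto
    have "a \<bullet> z = (\<Sum>k<DIM('v). (w k \<bullet> z) * (a \<bullet> u k))" by (rule inner_biorthogonal_expansion[OF bi])
    also have "\<dots> = (\<Sum>k<DIM('v). if k = Max K then (w k \<bullet> z) * (a \<bullet> u k) else 0)"
      using first_nonzero(3)[OF bi a0] j(3) first by (intro sum.cong) (auto simp: nat_neq_iff)
    also have "\<dots> = (w (Max K) \<bullet> z) * (a \<bullet> u (Max K))" using j(1) by simp
    also have "\<dots> \<noteq> 0" using j(2) first_nonzero(2)[OF bi a0] first by simp
    finally show False using az[OF ab] by simp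
  qed
  then show ?thesis using j(1) by blast
qed

lemma germ_insert_eq:
  assumes gC: "countable_hyperplanes C" and bi: "biorthogonal u (w :: nat \<Rightarrow> 'v::euclidean_space)"
    and cc: "cell_constant C f A" and j: "\<forall>(a,b)\<in>A. a \<bullet> p = b \<longrightarrow> first_nonzero a u \<noteq> j"
  shows "germ C f p w (insert j s) = germ C f p w s"
proof -
  obtain d1 where d1: "d1 > 0" "\<forall>x\<in>sector p w (insert j s) d1 \<inter> V' C.
      (\<forall>(a,b)\<in>A. (a \<bullet> x \<le> b) = sector_side a b p u (insert j s)) \<and> f x = germ C f p w (insert j s)"
    using cell_constant_germ[OF gC bi cc] by blast
  obtain d2 where d2: "d2 > 0" "\<forall>x\<in>sector p w s d2 \<inter> V' C.
      (\<forall>(a,b)\<in>A. (a \<bullet> x \<le> b) = sector_side a b p u s) \<and> f x = germ C f p w s"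
    using cell_constant_germ[OF gC bi cc] by blast
  obtain x where x: "x \<in> sector p w (insert j s) d1 \<inter> V' C" using sector_Int_V'_nonempty[OF gC bi d1(1)] by blast
  obtain y where y: "y \<in> sector p w s d2 \<inter> V' C" using sector_Int_V'_nonempty[OF gC bi d2(1)] by blast
  have "sector_side a b p u (insert j s) = sector_side a b p u s" if "(a,b) \<in> A" for a b
    using j that sector_sign_insert unfolding sector_side_def by auto
  then have "\<forall>(a,b)\<in>A. (a \<bullet> x \<le> b) = (a \<bullet> y \<le> b)" using d1 d2 x y by fastforce
  then have "f x = f y" using cc x y unfolding cell_constant_def by blast
  then show ?thesis using d1 d2 x y by auto
qed

text \<open>Away from the vertices of \<open>A\<close>, the sectors at \<open>p\<close> pair up into sectors with the same germ.\<close>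

lemma odd_germ_sum_imp_vertex:
  assumes gC: "countable_hyperplanes C" and bi: "biorthogonal u (w :: nat \<Rightarrow> 'v::euclidean_space)"
    and cc: "cell_constant C f A" and odd: "odd (\<Sum>s\<in>Pow {..<DIM('v)}. germ C f p w s)"
  shows "p \<in> arrangement_vertices A"
proof (rule ccontr)
  assume "p \<notin> arrangement_vertices A"
  moreover have "\<forall>(a,b)\<in>A. a \<noteq> 0" using cc unfolding cell_constant_def by auto
  ultimately obtain j where "j < DIM('v)" "\<forall>(a,b)\<in>A. a \<bullet> p = b \<longrightarrow> first_nonzero a u \<noteq> j"
    using ex_frame_index_off_hyperplanes[OF bi] by blast
  then have "even (\<Sum>s\<in>Pow {..<DIM('v)}. germ C f p w s)"
    using germ_insert_eq[OF gC bi cc] by (intro even_sum_Pow_if_insert_invariant) auto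
  then show False using odd by simp
qed

section \<open>The ring \<open>CV\<^sub>\<C>\<close> and its translates\<close>

lemma cell_constant_binop:
  assumes "cell_constant C f A1" "cell_constant C g A2"
  shows "cell_constant C (\<lambda>x. F (f x) (g x)) (A1 \<union> A2)"
  unfolding cell_constant_def
proof (intro conjI ballI impI)
  show "finite (A1 \<union> A2)" "\<And>p. p \<in> A1 \<union> A2 \<Longrightarrow> case p of (a, b) \<Rightarrow> a \<noteq> 0"
    using assms unfolding cell_constant_def by auto
  fix x y assume xy: "x \<in> V' C" "y \<in> V' C" "\<forall>(a,b)\<in>A1 \<union> A2. (a \<bullet> x \<le> b) = (a \<bullet> y \<le> b)"
  then have "f x = f y" "g x = g y" using assms unfolding cell_constant_def by blast+
  then show "F (f x) (g x) = F (f y) (g y)" by simp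
qed

lemma cell_constant_indicator_polyhedron:
  assumes "polyhedron P"
  shows "\<exists>A. cell_constant C (indicator (P \<inter> V' C) :: 'v::euclidean_space \<Rightarrow> int) A"
proof -
  obtain F where F: "finite F" "P = \<Inter>F" "\<forall>h\<in>F. \<exists>a b. a \<noteq> 0 \<and> h = {x. a \<bullet> x \<le> b}"
    using assms unfolding polyhedron_def by blast
  define ab where "ab h = (SOME (a, b). a \<noteq> 0 \<and> h = {x. a \<bullet> x \<le> b})" for h :: "'v set"
  have ab: "\<forall>h\<in>F. fst (ab h) \<noteq> 0 \<and> h = {x. fst (ab h) \<bullet> x \<le> snd (ab h)}"
  proof
    fix h assume "h \<in> F"
    then obtain a b where "a \<noteq> 0" "h = {x. a \<bullet> x \<le> b}" using F(3) by blast
    then have "(\<lambda>(a, b). a \<noteq> 0 \<and> h = {x. a \<bullet> x \<le> b}) (a, b)" by simp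
    then have "(\<lambda>(a, b). a \<noteq> 0 \<and> h = {x. a \<bullet> x \<le> b}) (ab h)" unfolding ab_def by (rule someI)
    then show "fst (ab h) \<noteq> 0 \<and> h = {x. fst (ab h) \<bullet> x \<le> snd (ab h)}" by (simp add: case_prod_beta)
  qed
  have "x \<in> P \<longleftrightarrow> (\<forall>(a,b)\<in>ab ` F. a \<bullet> x \<le> b)" for x
    using F(2) ab by (auto simp: case_prod_beta)
  then have "cell_constant C (indicator (P \<inter> V' C) :: 'v \<Rightarrow> int) (ab ` F)"
    unfolding cell_constant_def using F(1) ab by (auto simp: case_prod_beta indicator_def)
  then show ?thesis by blast
qed

lemma CV_cell_constant:
  assumes "f \<in> CV C"
  shows "\<exists>A. cell_constant C f A"
  using assms
proof (induction rule: CV.induct)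
  case (gen P)
  then have "polyhedron P" unfolding C_tope_def using polytope_eq_bounded_polyhedron by blast
  then show ?case by (rule cell_constant_indicator_polyhedron)
next
  case zero
  show ?case by (rule exI[of _ "{}"]) (simp add: cell_constant_def)
next
  case (diff f g)
  then show ?case using cell_constant_binop by blast
next
  case (mult f g)
  then show ?case using cell_constant_binop by blast
qed

definition translation_invariant :: "'v::real_vector set \<Rightarrow> 'v set set \<Rightarrow> bool" where
  "translation_invariant \<Gamma> C \<longleftrightarrow> (\<forall>H\<in>C. \<forall>g\<in>\<Gamma>. (+) g ` H \<in> C)"

lemma translation_hyperplane: "(+) g ` {x. a \<bullet> x = b} = {y. a \<bullet> y = b + a \<bullet> (g::'v::real_inner)}"
proof
  show "(+) g ` {x. a \<bullet> x = b} \<subseteq> {y. a \<bullet> y = b + a \<bullet> g}" by (auto simp: inner_add_right)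
  show "{y. a \<bullet> y = b + a \<bullet> g} \<subseteq> (+) g ` {x. a \<bullet> x = b}"
    by (auto intro!: image_eqI[where x="_ - g"] simp: inner_diff_right)
qed

lemma translate_Inter:
  assumes "F \<noteq> {}"
  shows "(+) (g::'a::group_add) ` \<Inter>F = \<Inter>((\<lambda>H. (+) g ` H) ` F)"
proof safe
  fix y assume y: "y \<in> \<Inter>((\<lambda>H. (+) g ` H) ` F)"
  have "- g + y \<in> \<Inter>F"
  proof
    fix H assume "H \<in> F"
    then have "y \<in> (+) g ` H" using y by auto
    then show "- g + y \<in> H" by (auto simp: add.assoc[symmetric])
  qed
  then show "y \<in> (+) g ` \<Inter>F" by (intro image_eqI[of _ _ "- g + y"]) (simp_all add: add.assoc[symmetric])
qed (use assms in auto)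

lemma V'_translate:
  assumes "translation_invariant \<Gamma> C" "h \<in> \<Gamma>" "- h \<in> \<Gamma>"
  shows "x + h \<in> V' C \<longleftrightarrow> x \<in> V' C"
proof -
  have "x + h \<in> \<Union>C \<longleftrightarrow> x \<in> \<Union>C"
  proof
    assume "x + h \<in> \<Union>C"
    then obtain H where H: "H \<in> C" "x + h \<in> H" by auto
    then have "(+) (-h) ` H \<in> C" using assms unfolding translation_invariant_def by blast
    moreover have "x \<in> (+) (-h) ` H" using H(2) by (force intro: image_eqI[of _ _ "x + h"])
    ultimately show "x \<in> \<Union>C" by auto
  next
    assume "x \<in> \<Union>C"
    then obtain H where H: "H \<in> C" "x \<in> H" by auto
    then have "(+) h ` H \<in> C" using assms unfolding translation_invariant_def by auto
    moreover have "x + h \<in> (+) h ` H" using H(2) by (force simp: add.commute)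
    ultimately show "x + h \<in> \<Union>C" by auto
  qed
  then show ?thesis unfolding V'_def by auto
qed

lemma C_tope_translate:
  assumes "translation_invariant \<Gamma> C" "h \<in> \<Gamma>" "C_tope C P"
  shows "C_tope C ((+) h ` P)"
  unfolding C_tope_def
proof (intro conjI allI impI)
  show "polytope ((+) h ` P)" using assms(3) unfolding C_tope_def by (simp add: polytope_translation_eq)
  show "compact ((+) h ` P)" using assms(3) unfolding C_tope_def by (simp add: compact_translation)
  show "closure (interior ((+) h ` P)) = (+) h ` P"
    using assms(3) unfolding C_tope_def by (simp add: interior_translation closure_translation)
  fix F assume F: "F facet_of (+) h ` P"
  have eq: "(+) (-h) ` (+) h ` P = P" by (auto simp: image_image)
  have "(+) (-h) ` F face_of (+) (-h) ` (+) h ` P" using F face_of_translation_eq unfolding facet_of_def by blast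
  moreover have "(+) (-h) ` F \<noteq> {}" using F unfolding facet_of_def by blast
  moreover have "aff_dim ((+) (-h) ` F) = aff_dim P - 1"
    using F unfolding facet_of_def aff_dim_translation_eq by (simp add: aff_dim_translation_eq)
  ultimately have "(+) (-h) ` F facet_of P" unfolding facet_of_def eq by blast
  then obtain H where H: "H \<in> C" "(+) (-h) ` F \<subseteq> H" using assms(3) unfolding C_tope_def by blast
  have "(+) h ` H \<in> C" using H(1) assms(1,2) unfolding translation_invariant_def by blast
  moreover have "F \<subseteq> (+) h ` H"
  proof
    fix x assume "x \<in> F"
    then have "-h + x \<in> H" using H(2) by auto
    then show "x \<in> (+) h ` H" by (force intro: image_eqI[of _ _ "-h + x"])
  qed
  ultimately show "\<exists>H\<in>C. F \<subseteq> H" by blast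
qed

lemma CV_translate:
  assumes "translation_invariant \<Gamma> C" "h \<in> \<Gamma>" "- h \<in> \<Gamma>" "f \<in> CV C"
  shows "translate_fun h f \<in> CV C"
  using assms(4)
proof (induction rule: CV.induct)
  case (gen P)
  have "translate_fun h (indicator (P \<inter> V' C)) = (indicator ((+) h ` P \<inter> V' C) :: _ \<Rightarrow> int)"
  proof
    fix x
    have "x - h \<in> V' C \<longleftrightarrow> x \<in> V' C" using V'_translate[OF assms(1-3), of "x - h"] by simp
    moreover have "x - h \<in> P \<longleftrightarrow> x \<in> (+) h ` P" by (force intro: image_eqI[of _ _ "x - h"])
    ultimately show "translate_fun h (indicator (P \<inter> V' C)) x = (indicator ((+) h ` P \<inter> V' C) x :: int)"
      unfolding translate_fun_def by (simp add: indicator_def)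
  qed
  then show ?case using CV.gen[OF C_tope_translate[OF assms(1,2) gen]] by simp
next
  case zero
  show ?case by (simp add: translate_fun_def CV.zero)
next
  case (diff f g)
  then show ?case using CV.diff[OF diff.IH] unfolding translate_fun_def by simp
next
  case (mult f g)
  then show ?case using CV.mult[OF mult.IH] unfolding translate_fun_def by simp
qed

lemma CV_add: "f \<in> CV C \<Longrightarrow> g \<in> CV C \<Longrightarrow> (\<lambda>x. f x + g x) \<in> CV C"
  using CV.diff[OF _ CV.diff[OF CV.zero], of f C g] by simp

lemma CV_uminus: "f \<in> CV C \<Longrightarrow> (\<lambda>x. - f x) \<in> CV C"
  using CV.diff[OF CV.zero, of f C] by simp

lemma comm_group_CV_group: "comm_group (CV_group C)"
proof (rule comm_groupI)
  fix f assume "f \<in> carrier (CV_group C)"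
  then show "\<exists>g\<in>carrier (CV_group C). g \<otimes>\<^bsub>CV_group C\<^esub> f = \<one>\<^bsub>CV_group C\<^esub>"
    unfolding CV_group_def by (auto intro!: bexI[of _ "\<lambda>x. - f x"] CV_uminus)
qed (auto simp: CV_group_def CV_add CV.zero add.assoc add.commute)

section \<open>Singular flags and adapted frames\<close>

lemma ex_biorthogonal: "\<exists>u w. biorthogonal u (w :: nat \<Rightarrow> 'v::euclidean_space)"
proof -
  obtain e where e: "bij_betw e {..<DIM('v)} (Basis :: 'v set)"
    using ex_bij_betw_nat_finite[OF finite_Basis[where 'a='v]] by (metis atLeast0LessThan)
  have "e i \<bullet> e k = (if i = k then 1 else 0)" if "i < DIM('v)" "k < DIM('v)" for i k
  proof -
    have "e i \<in> Basis" "e k \<in> Basis" using e that bij_betwE by fastforce+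
    moreover have "e i = e k \<longleftrightarrow> i = k" using e that unfolding bij_betw_def inj_on_def by auto
    ultimately show ?thesis by (simp add: inner_Basis)
  qed
  moreover have "x = (\<Sum>k<DIM('v). (e k \<bullet> x) *\<^sub>R e k)" for x
  proof -
    have "(\<Sum>k<DIM('v). (e k \<bullet> x) *\<^sub>R e k) = (\<Sum>b\<in>Basis. (b \<bullet> x) *\<^sub>R b)"
      using sum.reindex_bij_betw[OF e, of "\<lambda>b. (b \<bullet> x) *\<^sub>R b"] by simp
    also have "\<dots> = x" using euclidean_representation[of x] by (simp add: inner_commute)
    finally show ?thesis by simp
  qed
  ultimately have "biorthogonal e e" unfolding biorthogonal_def by blast
  then show ?thesis by blast
qed

definition difference_set :: "'v::real_vector set \<Rightarrow> 'v set" where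
  "difference_set \<theta> = {x - y | x y. x \<in> \<theta> \<and> y \<in> \<theta>}"

definition frame_adapted :: "'v::euclidean_space set list \<Rightarrow> (nat \<Rightarrow> 'v) \<Rightarrow> bool" where
  "frame_adapted ds u \<longleftrightarrow>
     (\<forall>k<DIM('v). u k \<in> (if Suc k < DIM('v) then ds ! Suc k else UNIV) \<and> u k \<notin> ds ! k)"

text \<open>A biorthogonal frame \<open>(u, w)\<close> with \<open>u\<^sub>k\<close> parallel to \<open>\<theta>\<^sub>k\<^sub>+\<^sub>1\<close> but not to \<open>\<theta>\<^sub>k\<close>, when one exists.
  It only depends on the directions of the flag, hence is invariant under translation.\<close>

definition flag_frame :: "'v::euclidean_space set list \<Rightarrow> (nat \<Rightarrow> 'v) \<times> (nat \<Rightarrow> 'v)" where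
  "flag_frame fl = (let ds = map difference_set fl in
     if \<exists>u w. biorthogonal u w \<and> frame_adapted ds u then SOME (u, w). biorthogonal u w \<and> frame_adapted ds u
     else SOME (u, w). biorthogonal u w)"

lemma flag_frame_biorthogonal: "biorthogonal (fst (flag_frame fl)) (snd (flag_frame (fl :: 'v::euclidean_space set list)))"
proof (cases "\<exists>u w. biorthogonal u w \<and> frame_adapted (map difference_set fl) u")
  case True
  then have "(\<lambda>(u, w). biorthogonal u w \<and> frame_adapted (map difference_set fl) u)
      (SOME (u, w). biorthogonal u w \<and> frame_adapted (map difference_set fl) u)"
    by (intro someI_ex[where P="\<lambda>(u, w). _ u w"]) auto
  then show ?thesis unfolding flag_frame_def Let_def if_P[OF True] by (simp add: case_prod_beta)
next
  case False
  have "(\<lambda>(u, w). biorthogonal u (w :: nat \<Rightarrow> 'v)) (SOME (u, w). biorthogonal u w)"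
    using ex_biorthogonal by (intro someI_ex[where P="\<lambda>(u, w). _ u w"]) auto
  then show ?thesis unfolding flag_frame_def Let_def if_not_P[OF False] by (simp add: case_prod_beta)
qed

lemma flag_frame_adapted:
  assumes "biorthogonal u w" "frame_adapted (map difference_set fl) u"
  shows "frame_adapted (map difference_set fl) (fst (flag_frame (fl :: 'v::euclidean_space set list)))"
proof -
  have ex: "\<exists>u w. biorthogonal u (w :: nat \<Rightarrow> 'v) \<and> frame_adapted (map difference_set fl) u"
    using assms by blast
  then have "(\<lambda>(u, w). biorthogonal u w \<and> frame_adapted (map difference_set fl) u)
      (SOME (u, w). biorthogonal u w \<and> frame_adapted (map difference_set fl) u)"
    by (intro someI_ex[where P="\<lambda>(u, w). _ u w"]) auto
  then show ?thesis unfolding flag_frame_def Let_def if_P[OF ex] by (simp add: case_prod_beta)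
qed

lemma difference_set_translate: "difference_set ((+) g ` \<theta>) = difference_set \<theta>"
  unfolding difference_set_def by (auto; metis add_diff_cancel_left image_eqI)

lemma translate_flag_add: "translate_flag g (translate_flag h fl) = translate_flag (g + h) fl"
  unfolding translate_flag_def by (simp add: image_image add.assoc comp_def)

lemma translate_flag_0: "translate_flag 0 fl = fl"
  unfolding translate_flag_def by (rule map_idI) simp

lemma length_translate_flag [simp]: "length (translate_flag g fl) = length fl"
  unfolding translate_flag_def by simp

lemma nth_translate_flag: "j < length fl \<Longrightarrow> translate_flag g fl ! j = (+) g ` (fl ! j)"
  unfolding translate_flag_def by simp

lemma flag_frame_translate: "flag_frame (translate_flag g fl) = flag_frame fl"
  unfolding flag_frame_def translate_flag_def by (simp add: comp_def difference_set_translate)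

definition flag_point :: "'v set list \<Rightarrow> 'v" where
  "flag_point fl = the_elem (fl ! 0)"

lemma singular_flag_nth_0:
  assumes "fl \<in> singular_flags C"
  shows "fl ! 0 = {flag_point fl}"
proof -
  have "fl ! 0 \<in> C_k C 0" using assms unfolding singular_flags_def by auto
  then have "aff_dim (fl ! 0) = 0" unfolding C_k_def by auto
  then obtain a where "fl ! 0 = {a}" using aff_dim_eq_0 by blast
  then show ?thesis unfolding flag_point_def by simp
qed

lemma singular_flag_length: "fl \<in> singular_flags (C :: 'v::euclidean_space set set) \<Longrightarrow> length fl = DIM('v)"
  unfolding singular_flags_def by auto

lemma flag_point_translate:
  assumes "fl \<in> singular_flags C"
  shows "flag_point (translate_flag g fl) = g + flag_point fl"
proof -
  have "translate_flag g fl ! 0 = (+) g ` (fl ! 0)"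
    using singular_flag_length[OF assms] by (simp add: nth_translate_flag)
  also have "\<dots> = {g + flag_point fl}" using singular_flag_nth_0[OF assms] by simp
  finally show ?thesis by (simp add: flag_point_def)
qed

lemma singular_flag_point_mem:
  assumes "fl \<in> singular_flags (C :: 'v::euclidean_space set set)" "j < DIM('v)"
  shows "flag_point fl \<in> fl ! j"
  using assms(2)
proof (induction j)
  case 0
  then show ?case using singular_flag_nth_0[OF assms(1)] by simp
next
  case (Suc j)
  then show ?case using assms(1) unfolding singular_flags_def by force
qed

definition flag_germ_sum :: "'v::euclidean_space set set \<Rightarrow> ('v \<Rightarrow> int) \<Rightarrow> 'v set list \<Rightarrow> int" where
  "flag_germ_sum C f fl = (\<Sum>s\<in>Pow {..<DIM('v)}. germ C f (flag_point fl) (snd (flag_frame fl)) s)"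

lemma singular_flag_subset_Inter_hyperplanes_through:
  fixes C :: "'v::euclidean_space set set"
  assumes "fl \<in> singular_flags C"
  shows "set fl \<subseteq> Inter ` Pow {H \<in> C. flag_point fl \<in> H}"
proof
  fix \<theta> assume "\<theta> \<in> set fl"
  then obtain j where j: "j < DIM('v)" "\<theta> = fl ! j"
    using singular_flag_length[OF assms] by (auto simp: in_set_conv_nth)
  then have "\<theta> \<in> C_k C j" using assms unfolding singular_flags_def by auto
  then obtain F where F: "F \<subseteq> C" "\<theta> = \<Inter>F" unfolding C_k_def by auto
  moreover have "flag_point fl \<in> \<theta>" using singular_flag_point_mem[OF assms j(1)] j(2) by simp
  ultimately have "F \<subseteq> {H \<in> C. flag_point fl \<in> H}" by auto
  then show "\<theta> \<in> Inter ` Pow {H \<in> C. flag_point fl \<in> H}" using F(2) by blast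
qed

lemma translate_singular_flag:
  fixes C :: "'v::euclidean_space set set"
  assumes "translation_invariant \<Gamma> C" "g \<in> \<Gamma>" "fl \<in> singular_flags C"
  shows "translate_flag g fl \<in> singular_flags C"
  unfolding singular_flags_def
proof (intro CollectI conjI allI impI)
  have len: "length fl = DIM('v)" using singular_flag_length[OF assms(3)] .
  then show "length (translate_flag g fl) = DIM('v)" by simp
  fix j
  assume j: "j < DIM('v)"
  then have "fl ! j \<in> C_k C j" using assms(3) unfolding singular_flags_def by auto
  then obtain F where F: "F \<subseteq> C" "F \<noteq> {}" "fl ! j = \<Inter>F" "fl ! j \<noteq> {}" "aff_dim (fl ! j) = int j"
    unfolding C_k_def by blast
  define F' where "F' = (\<lambda>H. (+) g ` H) ` F"
  have tr: "translate_flag g fl ! j = (+) g ` (fl ! j)" by (rule nth_translate_flag) (simp add: len j)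
  have "translate_flag g fl ! j = \<Inter>F'" unfolding tr F(3) F'_def by (rule translate_Inter[OF F(2)])
  moreover have "F' \<subseteq> C" "F' \<noteq> {}"
    using F(1,2) assms(1,2) unfolding F'_def translation_invariant_def by auto
  moreover have "translate_flag g fl ! j \<noteq> {}" "aff_dim (translate_flag g fl ! j) = int j"
    unfolding tr using F(4,5) by (simp_all add: aff_dim_translation_eq)
  ultimately show "translate_flag g fl ! j \<in> C_k C j" unfolding C_k_def by blast
next
  fix j
  assume "Suc j < DIM('v)"
  then have "fl ! j \<subseteq> fl ! Suc j" using assms(3) unfolding singular_flags_def by blast
  then show "translate_flag g fl ! j \<subseteq> translate_flag g fl ! Suc j"
    using \<open>Suc j < DIM('v)\<close> singular_flag_length[OF assms(3)] by (simp add: nth_translate_flag image_mono)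
qed

section \<open>The homomorphism on coinvariants\<close>

lemma group_hom_FactGroup_rep:
  assumes h: "group_hom G H \<phi>" and N: "N \<lhd> G" "N \<subseteq> kernel G H \<phi>" and x: "x \<in> carrier G"
  shows "\<phi> (SOME y. y \<in> N #>\<^bsub>G\<^esub> x) = \<phi> x"
proof -
  have "x \<in> N #>\<^bsub>G\<^esub> x" using group.rcos_self[OF normal.axioms(2)[OF N(1)] x normal.axioms(1)[OF N(1)]] .
  then have "(SOME y. y \<in> N #>\<^bsub>G\<^esub> x) \<in> N #>\<^bsub>G\<^esub> x" by (rule someI)
  then obtain n where n: "n \<in> N" "(SOME y. y \<in> N #>\<^bsub>G\<^esub> x) = n \<otimes>\<^bsub>G\<^esub> x"
    unfolding r_coset_def by auto
  then have "n \<in> carrier G" "\<phi> n = \<one>\<^bsub>H\<^esub>" using N(2) unfolding kernel_def by auto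
  then have "\<phi> (n \<otimes>\<^bsub>G\<^esub> x) = \<one>\<^bsub>H\<^esub> \<otimes>\<^bsub>H\<^esub> \<phi> x" using group_hom.hom_mult[OF h] x by simp
  also have "\<dots> = \<phi> x" using group_hom.hom_closed[OF h x] h by (simp add: group_hom_def group.is_monoid)
  finally show ?thesis using n(2) by simp
qed

lemma group_hom_FactGroup:
  assumes h: "group_hom G H \<phi>" and N: "N \<lhd> G" "N \<subseteq> kernel G H \<phi>"
  shows "(\<lambda>Q. \<phi> (SOME x. x \<in> Q)) \<in> hom (G Mod N) H"
proof (rule homI)
  have G: "group G" using normal.axioms(2)[OF N(1)] .
  fix P Q assume "P \<in> carrier (G Mod N)" "Q \<in> carrier (G Mod N)"
  then obtain x y where xy: "x \<in> carrier G" "P = N #>\<^bsub>G\<^esub> x" "y \<in> carrier G" "Q = N #>\<^bsub>G\<^esub> y"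
    unfolding carrier_FactGroup by auto
  show "\<phi> (SOME x. x \<in> P) \<in> carrier H"
    unfolding xy(2) group_hom_FactGroup_rep[OF assms xy(1)] using xy(1) by (rule group_hom.hom_closed[OF h])
  have xy_mem: "x \<otimes>\<^bsub>G\<^esub> y \<in> carrier G" using xy(1,3) by (rule monoid.m_closed[OF group.is_monoid[OF G]])
  have PQ: "P \<otimes>\<^bsub>G Mod N\<^esub> Q = N #>\<^bsub>G\<^esub> (x \<otimes>\<^bsub>G\<^esub> y)"
    using normal.rcos_sum[OF N(1) xy(1,3)] xy(2,4) by simp
  have "\<phi> (SOME z. z \<in> P \<otimes>\<^bsub>G Mod N\<^esub> Q) = \<phi> (SOME z. z \<in> N #>\<^bsub>G\<^esub> (x \<otimes>\<^bsub>G\<^esub> y))"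
    using PQ by (rule arg_cong)
  also have "\<dots> = \<phi> (x \<otimes>\<^bsub>G\<^esub> y)" by (rule group_hom_FactGroup_rep[OF assms xy_mem])
  also have "\<dots> = \<phi> x \<otimes>\<^bsub>H\<^esub> \<phi> y" using group_hom.hom_mult[OF h xy(1,3)] .
  also have "\<dots> = \<phi> (SOME z. z \<in> P) \<otimes>\<^bsub>H\<^esub> \<phi> (SOME z. z \<in> Q)"
    unfolding xy(2,4) group_hom_FactGroup_rep[OF assms xy(1)] group_hom_FactGroup_rep[OF assms xy(3)] ..
  finally show "\<phi> (SOME z. z \<in> P \<otimes>\<^bsub>G Mod N\<^esub> Q) = \<phi> (SOME z. z \<in> P) \<otimes>\<^bsub>H\<^esub> \<phi> (SOME z. z \<in> Q)" .
qed

locale lattice_arrangement =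
  fixes \<Gamma> :: "'v::euclidean_space set" and C :: "'v set set" and B :: "'v set"
  assumes hyperplanes: "countable_hyperplanes C" and invariant: "translation_invariant \<Gamma> C"
    and \<Gamma>_eq: "\<Gamma> = int_span B" and finite_B: "finite B" and independent_B: "int_independent B"
    and finite_orbits: "\<exists>S. finite S \<and> S \<subseteq> C \<and> C = {(+) g ` H | g H. g \<in> \<Gamma> \<and> H \<in> S}"
begin

lemma \<Gamma>_add: "x \<in> \<Gamma> \<Longrightarrow> y \<in> \<Gamma> \<Longrightarrow> x + y \<in> \<Gamma>"
  using int_span_add \<Gamma>_eq by blast

lemma \<Gamma>_uminus: "x \<in> \<Gamma> \<Longrightarrow> - x \<in> \<Gamma>"
  using int_span_uminus \<Gamma>_eq by blast

lemma \<Gamma>_diff: "x \<in> \<Gamma> \<Longrightarrow> y \<in> \<Gamma> \<Longrightarrow> x - y \<in> \<Gamma>"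
  using \<Gamma>_add[OF _ \<Gamma>_uminus, of x y] by simp

lemma \<Gamma>_zero: "0 \<in> \<Gamma>"
  unfolding \<Gamma>_eq int_span_def by (auto intro!: exI[of _ "\<lambda>_. 0"])

lemma CV_translate: "f \<in> CV C \<Longrightarrow> h \<in> \<Gamma> \<Longrightarrow> translate_fun h f \<in> CV C"
  using CV_translate[OF invariant _ \<Gamma>_uminus] by blast

lemma has_germ_translate:
  assumes "has_germ C f p w s c" "h \<in> \<Gamma>"
  shows "has_germ C (translate_fun h f) (h + p) w s c"
proof -
  obtain d where d: "d > 0" "\<forall>x\<in>sector p w s d \<inter> V' C. f x = c" using assms(1) unfolding has_germ_def by auto
  have "translate_fun h f x = c" if "x \<in> sector (h + p) w s d \<inter> V' C" for x
  proof -
    have "x - h \<in> sector p w s d" using that unfolding sector_def mem_Collect_eq Int_iff diff_diff_eq by blast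
    moreover have "x - h \<in> V' C" using that V'_translate[OF invariant assms(2) \<Gamma>_uminus[OF assms(2)], of "x - h"] by simp
    ultimately show ?thesis using d unfolding translate_fun_def by auto
  qed
  then show ?thesis unfolding has_germ_def using d(1) by blast
qed

lemma CV_has_germ:
  assumes "f \<in> CV C" "biorthogonal u w"
  shows "has_germ C f p w s (germ C f p w s)"
  using CV_cell_constant[OF assms(1)] cell_constant_has_germ[OF hyperplanes assms(2)] by blast

lemma germ_translate:
  assumes "f \<in> CV C" "biorthogonal u w" "h \<in> \<Gamma>"
  shows "germ C (translate_fun h f) (h + p) w s = germ C f p w s"
  using has_germ_translate[OF CV_has_germ[OF assms(1,2)] assms(3)] by (rule germ_eqI[OF hyperplanes assms(2)])

lemma germ_binop:
  assumes "f \<in> CV C" "g \<in> CV C" "biorthogonal u w"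
  shows "germ C (\<lambda>x. F (f x) (g x)) p w s = F (germ C f p w s) (germ C g p w s)"
  using has_germ_binop[OF CV_has_germ[OF assms(1,3)] CV_has_germ[OF assms(2,3)]]
  by (rule germ_eqI[OF hyperplanes assms(3)])

lemma flag_germ_sum_add:
  assumes "f \<in> CV C" "g \<in> CV C"
  shows "flag_germ_sum C (\<lambda>x. f x + g x) fl = flag_germ_sum C f fl + flag_germ_sum C g fl"
  unfolding flag_germ_sum_def using germ_binop[OF assms flag_frame_biorthogonal, where F="(+)"]
  by (simp add: sum.distrib)

lemma flag_germ_sum_diff:
  assumes "f \<in> CV C" "g \<in> CV C"
  shows "flag_germ_sum C (\<lambda>x. f x - g x) fl = flag_germ_sum C f fl - flag_germ_sum C g fl"
  unfolding flag_germ_sum_def using germ_binop[OF assms flag_frame_biorthogonal, where F="(-)"]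
  by (simp add: sum_subtractf)

lemma flag_germ_sum_translate:
  assumes "f \<in> CV C" "h \<in> \<Gamma>" "fl \<in> singular_flags C"
  shows "flag_germ_sum C (translate_fun h f) (translate_flag g fl) = flag_germ_sum C f (translate_flag (g - h) fl)"
proof -
  have "flag_point (translate_flag g fl) = h + flag_point (translate_flag (g - h) fl)"
    using flag_point_translate[OF assms(3)] by simp
  then show ?thesis unfolding flag_germ_sum_def flag_frame_translate
    using germ_translate[OF assms(1) flag_frame_biorthogonal assms(2)] by simp
qed

lemma flag_germ_sum_odd_imp_vertex:
  assumes "cell_constant C f A" "odd (flag_germ_sum C f fl)"
  shows "flag_point fl \<in> arrangement_vertices A"
  using odd_germ_sum_imp_vertex[OF hyperplanes flag_frame_biorthogonal assms(1)] assms(2)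
  unfolding flag_germ_sum_def by blast

definition orbit_rep :: "'v set list set \<Rightarrow> 'v set list" where
  "orbit_rep J = (SOME fl. fl \<in> singular_flags C \<and> flag_orbit \<Gamma> fl = J)"

lemma orbit_rep:
  assumes "J \<in> flag_orbits \<Gamma> C"
  shows "orbit_rep J \<in> singular_flags C" "flag_orbit \<Gamma> (orbit_rep J) = J"
proof -
  have "\<exists>fl. fl \<in> singular_flags C \<and> flag_orbit \<Gamma> fl = J" using assms unfolding flag_orbits_def by auto
  then have "orbit_rep J \<in> singular_flags C \<and> flag_orbit \<Gamma> (orbit_rep J) = J"
    unfolding orbit_rep_def by (rule someI_ex)
  then show "orbit_rep J \<in> singular_flags C" "flag_orbit \<Gamma> (orbit_rep J) = J" by auto
qed

definition odd_translates :: "'v set list set \<Rightarrow> ('v \<Rightarrow> int) \<Rightarrow> 'v set" where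
  "odd_translates J f = {g \<in> \<Gamma>. odd (flag_germ_sum C f (translate_flag g (orbit_rep J)))}"

definition odd_translate_sets :: "'v set list set \<Rightarrow> 'v set set" where
  "odd_translate_sets J = {odd_translates J f | f. f \<in> CV C}"

definition xi :: "('v \<Rightarrow> int) \<Rightarrow> 'v set list set \<Rightarrow> int" where
  "xi f = (\<lambda>J\<in>flag_orbits \<Gamma> C. parity_val \<Gamma> (odd_translate_sets J) (odd_translates J f))"

lemma finite_odd_translates:
  assumes "J \<in> flag_orbits \<Gamma> C" "f \<in> CV C"
  shows "finite (odd_translates J f)"
proof -
  obtain A where A: "cell_constant C f A" using CV_cell_constant assms(2) by blast
  have "odd_translates J f \<subseteq> (\<lambda>g. g + flag_point (orbit_rep J)) -` arrangement_vertices A"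
  proof
    fix g assume "g \<in> odd_translates J f"
    then have "flag_point (translate_flag g (orbit_rep J)) \<in> arrangement_vertices A"
      using flag_germ_sum_odd_imp_vertex[OF A] unfolding odd_translates_def by blast
    then show "g \<in> (\<lambda>g. g + flag_point (orbit_rep J)) -` arrangement_vertices A"
      using flag_point_translate[OF orbit_rep(1)[OF assms(1)]] by simp
  qed
  moreover have "finite ((\<lambda>g. g + flag_point (orbit_rep J)) -` arrangement_vertices A)"
    using A unfolding cell_constant_def by (intro finite_vimageI finite_arrangement_vertices) (auto simp: inj_def)
  ultimately show ?thesis by (rule finite_subset)
qed

lemma odd_translate_sets:
  "J \<in> flag_orbits \<Gamma> C \<Longrightarrow> D \<in> odd_translate_sets J \<Longrightarrow> D \<subseteq> \<Gamma> \<and> finite D"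
  unfolding odd_translate_sets_def using finite_odd_translates by (auto simp: odd_translates_def)

lemma odd_translates_add:
  assumes "f \<in> CV C" "g \<in> CV C"
  shows "odd_translates J (\<lambda>x. f x + g x) = sym_diff (odd_translates J f) (odd_translates J g)"
  unfolding odd_translates_def using flag_germ_sum_add[OF assms] by auto

lemma odd_translates_diff:
  assumes "f \<in> CV C" "g \<in> CV C"
  shows "odd_translates J (\<lambda>x. f x - g x) = sym_diff (odd_translates J f) (odd_translates J g)"
  unfolding odd_translates_def using flag_germ_sum_diff[OF assms] by auto

lemma odd_translates_translate:
  assumes "J \<in> flag_orbits \<Gamma> C" "f \<in> CV C" "h \<in> \<Gamma>"
  shows "odd_translates J (translate_fun h f) = (+) h ` odd_translates J f"
proof -
  have "odd_translates J (translate_fun h f) = {g \<in> \<Gamma>. odd (flag_germ_sum C f (translate_flag (g - h) (orbit_rep J)))}"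
    unfolding odd_translates_def using flag_germ_sum_translate[OF assms(2,3) orbit_rep(1)[OF assms(1)]] by simp
  also have "\<dots> = (+) h ` odd_translates J f"
  proof safe
    fix g assume "g \<in> \<Gamma>" "odd (flag_germ_sum C f (translate_flag (g - h) (orbit_rep J)))"
    then have "g - h \<in> odd_translates J f" unfolding odd_translates_def using \<Gamma>_diff assms(3) by blast
    then show "g \<in> (+) h ` odd_translates J f" by (intro image_eqI[of _ _ "g - h"]) auto
  qed (use \<Gamma>_add assms(3) in \<open>auto simp: odd_translates_def\<close>)
  finally show ?thesis .
qed

lemma xi_coinv_generator:
  assumes "J \<in> flag_orbits \<Gamma> C" "f \<in> CV C" "h \<in> \<Gamma>"
  shows "xi (\<lambda>x. f x - translate_fun h f x) J = 0"
proof -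
  have "odd_translates J (\<lambda>x. f x - translate_fun h f x)
      = sym_diff (odd_translates J f) ((+) h ` odd_translates J f)"
    using odd_translates_diff[OF assms(2) CV_translate[OF assms(2,3)]] odd_translates_translate[OF assms] by simp
  moreover have "odd_translates J f \<in> odd_translate_sets J" unfolding odd_translate_sets_def using assms(2) by blast
  moreover have "add_closed \<Gamma>" unfolding \<Gamma>_eq by (rule add_closed_int_span)
  ultimately show ?thesis unfolding xi_def
    using parity_val_translate[OF _ odd_translate_sets[OF assms(1)] _ assms(3)] assms(1) by simp
qed

lemma finite_hyperplanes_through: "finite {H \<in> C. q \<in> H}"
proof -
  obtain S where S: "finite S" "S \<subseteq> C" "C = {(+) g ` H | g H. g \<in> \<Gamma> \<and> H \<in> S}" using finite_orbits by blast
  define tr where "tr H = (+) (SOME g. g \<in> \<Gamma> \<and> q \<in> (+) g ` H) ` H" for H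
  have "{H \<in> C. q \<in> H} \<subseteq> tr ` S"
  proof
    fix H' assume H': "H' \<in> {H \<in> C. q \<in> H}"
    then obtain g H where gH: "g \<in> \<Gamma>" "H \<in> S" "H' = (+) g ` H" using S(3) by auto
    define g' where "g' = (SOME g. g \<in> \<Gamma> \<and> q \<in> (+) g ` H)"
    have "g' \<in> \<Gamma> \<and> q \<in> (+) g' ` H" unfolding g'_def by (rule someI[of _ g]) (use gH H' in auto)
    moreover obtain a b where ab: "a \<noteq> 0" "H = {x. a \<bullet> x = b}"
      using gH(2) S(2) hyperplanes unfolding countable_hyperplanes_def affine_hyperplane_def by blast
    ultimately have "a \<bullet> q = b + a \<bullet> g'" using translation_hyperplane by blast
    moreover have "a \<bullet> q = b + a \<bullet> g" using H' gH ab translation_hyperplane by blast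
    ultimately have "(+) g ` H = (+) g' ` H" using ab by (simp add: translation_hyperplane)
    then show "H' \<in> tr ` S" using gH unfolding tr_def g'_def by auto
  qed
  then show ?thesis using S(1) finite_subset by blast
qed

lemma flag_orbit_translate:
  assumes "g \<in> \<Gamma>"
  shows "flag_orbit \<Gamma> (translate_flag g fl) = flag_orbit \<Gamma> fl"
  unfolding flag_orbit_def
proof safe
  fix h assume "h \<in> \<Gamma>"
  then show "\<exists>h'. translate_flag h (translate_flag g fl) = translate_flag h' fl \<and> h' \<in> \<Gamma>"
    using assms \<Gamma>_add by (auto simp: translate_flag_add)
next
  fix h assume h: "h \<in> \<Gamma>"
  have "translate_flag h fl = translate_flag (h - g) (translate_flag g fl)" by (simp add: translate_flag_add)
  then show "\<exists>h'. translate_flag h fl = translate_flag h' (translate_flag g fl) \<and> h' \<in> \<Gamma>"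
    using \<Gamma>_diff[OF h assms] by blast
qed

text \<open>A flag orbit in the support of \<open>xi f\<close> contains a flag at a vertex of a cell decomposition
  for \<open>f\<close>, and there are only finitely many flags made of hyperplanes through a given point.\<close>

lemma finite_support_xi:
  assumes "f \<in> CV C"
  shows "finite {J \<in> flag_orbits \<Gamma> C. xi f J \<noteq> 0}"
proof -
  obtain A where A: "cell_constant C f A" using CV_cell_constant assms by blast
  define L where "L = (\<Union>q\<in>arrangement_vertices A. {fl. set fl \<subseteq> Inter ` Pow {H \<in> C. q \<in> H} \<and> length fl = DIM('v)})"
  have "finite L" unfolding L_def using A finite_hyperplanes_through unfolding cell_constant_def
    by (intro finite_UN_I finite_arrangement_vertices finite_lists_length_eq) auto
  moreover have "{J \<in> flag_orbits \<Gamma> C. xi f J \<noteq> 0} \<subseteq> flag_orbit \<Gamma> ` L"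
  proof
    fix J assume J: "J \<in> {J \<in> flag_orbits \<Gamma> C. xi f J \<noteq> 0}"
    then have "odd_translates J f \<noteq> {}" unfolding xi_def using parity_val_empty by force
    then obtain g where g: "g \<in> \<Gamma>" "odd (flag_germ_sum C f (translate_flag g (orbit_rep J)))"
      unfolding odd_translates_def by auto
    define fl where "fl = translate_flag g (orbit_rep J)"
    have fl: "fl \<in> singular_flags C"
      unfolding fl_def using translate_singular_flag[OF invariant g(1) orbit_rep(1)] J by simp
    have "flag_point fl \<in> arrangement_vertices A"
      using flag_germ_sum_odd_imp_vertex[OF A g(2)] unfolding fl_def .
    then have "fl \<in> L"
      unfolding L_def using singular_flag_subset_Inter_hyperplanes_through[OF fl] singular_flag_length[OF fl] by blast
    moreover have "J = flag_orbit \<Gamma> fl" unfolding fl_def using flag_orbit_translate[OF g(1)] orbit_rep(2) J by simp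
    ultimately show "J \<in> flag_orbit \<Gamma> ` L" by blast
  qed
  ultimately show ?thesis using finite_subset by blast
qed

lemma xi_carrier:
  assumes "f \<in> CV C"
  shows "xi f \<in> carrier (Z2_sum \<Gamma> C)"
proof -
  have "parity_val \<Gamma> (odd_translate_sets J) (odd_translates J f) \<in> {0..<2}" for J
    unfolding parity_val_def by simp
  then have "xi f \<in> (\<Pi>\<^sub>E J\<in>flag_orbits \<Gamma> C. {0..<2})" unfolding xi_def by simp
  then show ?thesis using finite_support_xi[OF assms]
    unfolding Z2_sum_def by (subst carrier_sum_group) (auto simp: carrier_integer_mod_group)
qed

lemma xi_add:
  assumes "f \<in> CV C" "g \<in> CV C"
  shows "xi (\<lambda>x. f x + g x) = xi f \<otimes>\<^bsub>Z2_sum \<Gamma> C\<^esub> xi g"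
proof
  fix J
  show "xi (\<lambda>x. f x + g x) J = (xi f \<otimes>\<^bsub>Z2_sum \<Gamma> C\<^esub> xi g) J"
  proof (cases "J \<in> flag_orbits \<Gamma> C")
    case True
    then show ?thesis unfolding xi_def Z2_sum_def
      using odd_translates_add[OF assms, of J]
        parity_val_sym_diff[OF finite_odd_translates[OF True assms(1)] finite_odd_translates[OF True assms(2)]]
      by simp
  qed (simp add: xi_def Z2_sum_def)
qed

lemma group_hom_xi: "group_hom (CV_group C) (Z2_sum \<Gamma> C) xi"
proof -
  have "xi \<in> hom (CV_group C) (Z2_sum \<Gamma> C)"
    using xi_carrier xi_add unfolding CV_group_def by (intro homI) auto
  then show ?thesis unfolding group_hom_def group_hom_axioms_def Z2_sum_def
    using comm_group.axioms(2)[OF comm_group_CV_group] by (simp add: sum_group)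
qed

lemma coinv_subgroup_subset_kernel: "coinv_subgroup \<Gamma> C \<subseteq> kernel (CV_group C) (Z2_sum \<Gamma> C) xi"
  unfolding coinv_subgroup_def
proof (rule group.generate_subgroup_incl[OF comm_group.axioms(2)[OF comm_group_CV_group]])
  show "subgroup (kernel (CV_group C) (Z2_sum \<Gamma> C) xi) (CV_group C)"
    using group_hom_xi by (rule group_hom.subgroup_kernel)
  show "{(\<lambda>x. f x - translate_fun g f x) | f g. f \<in> CV C \<and> g \<in> \<Gamma>} \<subseteq> kernel (CV_group C) (Z2_sum \<Gamma> C) xi"
  proof
    fix e assume "e \<in> {(\<lambda>x. f x - translate_fun g f x) | f g. f \<in> CV C \<and> g \<in> \<Gamma>}"
    then obtain f g where fg: "e = (\<lambda>x. f x - translate_fun g f x)" "f \<in> CV C" "g \<in> \<Gamma>" by blast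
    have "xi e = (\<lambda>J\<in>flag_orbits \<Gamma> C. 0)"
    proof
      fix J
      show "xi e J = (\<lambda>J\<in>flag_orbits \<Gamma> C. 0) J"
        using xi_coinv_generator[OF _ fg(2,3)] unfolding fg(1)
        by (cases "J \<in> flag_orbits \<Gamma> C") (simp_all add: xi_def)
    qed
    then have "xi e = \<one>\<^bsub>Z2_sum \<Gamma> C\<^esub>" by (simp add: Z2_sum_def)
    moreover have "e \<in> CV C" unfolding fg(1) using CV.diff[OF fg(2) CV_translate[OF fg(2,3)]] .
    ultimately show "e \<in> kernel (CV_group C) (Z2_sum \<Gamma> C) xi"
      unfolding kernel_def CV_group_def by simp
  qed
qed

lemma coinv_subgroup_normal: "coinv_subgroup \<Gamma> C \<lhd> CV_group C"
proof -
  have "subgroup (coinv_subgroup \<Gamma> C) (CV_group C)"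
    unfolding coinv_subgroup_def
    by (rule group.generate_is_subgroup[OF comm_group.axioms(2)[OF comm_group_CV_group]])
       (auto simp: CV_group_def intro: CV.diff CV_translate)
  then show ?thesis by (rule comm_group.subgroup_imp_normal[OF comm_group_CV_group])
qed

lemma xi_coset_rep: "f \<in> CV C \<Longrightarrow> xi (SOME g. g \<in> coinv_subgroup \<Gamma> C #>\<^bsub>CV_group C\<^esub> f) = xi f"
  using group_hom_FactGroup_rep[OF group_hom_xi coinv_subgroup_normal coinv_subgroup_subset_kernel]
  by (simp add: CV_group_def)

lemma hom_H0_xi: "(\<lambda>Q. xi (SOME f. f \<in> Q)) \<in> hom (H0 \<Gamma> C) (Z2_sum \<Gamma> C)"
  unfolding H0_def
  by (rule group_hom_FactGroup[OF group_hom_xi coinv_subgroup_normal coinv_subgroup_subset_kernel])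

end

section \<open>A box at a point of \<open>\<P>\<close>\<close>

lemma ex_biorthogonal_dual:
  fixes a :: "nat \<Rightarrow> 'v::euclidean_space"
  assumes ker: "\<And>z. (\<And>k. k < DIM('v) \<Longrightarrow> a k \<bullet> z = 0) \<Longrightarrow> z = 0"
  obtains u where "biorthogonal u a"
proof -
  obtain u0 w0 where bi0: "biorthogonal u0 (w0 :: nat \<Rightarrow> 'v)" using ex_biorthogonal by blast
  define L where "L x = (\<Sum>i<DIM('v). (a i \<bullet> x) *\<^sub>R u0 i)" for x
  have lin: "linear L" unfolding L_def
    by (auto intro!: linearI simp: inner_add_right scaleR_add_left sum.distrib scaleR_sum_right)
  have coord: "w0 k \<bullet> L x = a k \<bullet> x" if "k < DIM('v)" for k x
    unfolding L_def using biorthogonal_coord_sum[OF bi0 that] .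
  have inj: "inj L"
  proof (rule injI)
    fix x y assume xy: "L x = L y"
    have "a k \<bullet> (x - y) = 0" if "k < DIM('v)" for k
      using coord[OF that, of x] coord[OF that, of y] xy by (simp add: inner_diff_right)
    then show "x = y" using ker[of "x - y"] by simp
  qed
  have surj: "surj L" using linear_injective_imp_surjective[OF lin inj] by simp
  define u where "u k = (SOME y. L y = u0 k)" for k
  have Lu: "L (u k) = u0 k" for k unfolding u_def using surj by (metis (mono_tags) someI_ex surjD)
  have au: "a i \<bullet> u k = (if i = k then 1 else 0)" if "i < DIM('v)" "k < DIM('v)" for i k
    using coord[OF that(1), of "u k"] Lu biorthogonal_inner[OF bi0 that] by simp
  have "L (\<Sum>k<DIM('v). (a k \<bullet> x) *\<^sub>R u k) = L x" for x
  proof -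
    have "L (\<Sum>k<DIM('v). (a k \<bullet> x) *\<^sub>R u k) = (\<Sum>k<DIM('v). (a k \<bullet> x) *\<^sub>R L (u k))"
      using lin by (simp add: linear_sum linear_scale)
    also have "\<dots> = (\<Sum>k<DIM('v). (a k \<bullet> x) *\<^sub>R u0 k)" by (simp only: Lu)
    also have "\<dots> = L x" unfolding L_def ..
    finally show ?thesis .
  qed
  then have "x = (\<Sum>k<DIM('v). (a k \<bullet> x) *\<^sub>R u k)" for x using inj by (simp add: inj_eq)
  then have "biorthogonal u a" unfolding biorthogonal_def using au by blast
  then show thesis by (rule that)
qed

lemma points_P_normals:
  assumes C: "\<forall>H\<in>C. affine_hyperplane H" and v: "v \<in> points_P C"
  obtains a :: "nat \<Rightarrow> 'v::euclidean_space"
  where "\<And>i. i < DIM('v) \<Longrightarrow> a i \<noteq> 0" "\<And>i. i < DIM('v) \<Longrightarrow> {x. a i \<bullet> x = a i \<bullet> v} \<in> C"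
    and "\<And>z. (\<And>k. k < DIM('v) \<Longrightarrow> a k \<bullet> z = 0) \<Longrightarrow> z = 0"
proof -
  obtain F where F: "F \<subseteq> C" "finite F" "card F = DIM('v)" "\<Inter>F = {v}"
    using v unfolding points_P_def by blast
  obtain hb where hb: "bij_betw hb {..<DIM('v)} F"
    using ex_bij_betw_nat_finite[OF F(2)] F(3) by (auto simp: atLeast0LessThan)
  have "\<exists>a. a \<noteq> 0 \<and> hb i = {x. a \<bullet> x = a \<bullet> v}" if "i < DIM('v)" for i
  proof -
    have "hb i \<in> F" using hb that bij_betwE by blast
    then obtain a b where "a \<noteq> 0" "hb i = {x. a \<bullet> x = b}"
      using F(1) C unfolding affine_hyperplane_def by blast
    moreover have "v \<in> hb i" using F(4) \<open>hb i \<in> F\<close> by auto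
    ultimately show ?thesis by auto
  qed
  then obtain a where a: "\<And>i. i < DIM('v) \<Longrightarrow> a i \<noteq> 0 \<and> hb i = {x. a i \<bullet> x = a i \<bullet> v}"
    by metis
  show thesis
  proof (rule that)
    fix i assume i: "i < DIM('v)"
    show "a i \<noteq> 0" using a[OF i] by simp
    have "hb i \<in> F" using hb i bij_betwE by blast
    then show "{x. a i \<bullet> x = a i \<bullet> v} \<in> C" using a[OF i] F(1) by auto
  next
    fix z assume z: "\<And>k. k < DIM('v) \<Longrightarrow> a k \<bullet> z = 0"
    have "v + z \<in> \<Inter>F"
    proof
      fix H assume "H \<in> F"
      then obtain i where "i < DIM('v)" "H = hb i" using hb by (auto simp: bij_betw_def)
      then show "v + z \<in> H" using a z by (simp add: inner_add_right)
    qed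
    then show "z = 0" using F(4) by simp
  qed
qed

definition coordinate_flag :: "(nat \<Rightarrow> 'v::euclidean_space) \<Rightarrow> 'v \<Rightarrow> 'v set list" where
  "coordinate_flag a v = map (\<lambda>j. {x. \<forall>i. j \<le> i \<and> i < DIM('v) \<longrightarrow> a i \<bullet> x = a i \<bullet> v}) [0..<DIM('v)]"

lemma nth_coordinate_flag:
  "j < DIM('v) \<Longrightarrow> coordinate_flag a v ! j = {x. \<forall>i. j \<le> i \<and> i < DIM('v) \<longrightarrow> a i \<bullet> x = a i \<bullet> (v::'v::euclidean_space)}"
  unfolding coordinate_flag_def by simp

lemma difference_set_coordinate_subspace:
  "difference_set {x. \<forall>i. j \<le> i \<and> i < DIM('v) \<longrightarrow> a i \<bullet> x = a i \<bullet> (v::'v::euclidean_space)}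
     = {z. \<forall>i. j \<le> i \<and> i < DIM('v) \<longrightarrow> a i \<bullet> z = 0}"
proof safe
  fix z i assume "z \<in> difference_set {x. \<forall>i. j \<le> i \<and> i < DIM('v) \<longrightarrow> a i \<bullet> x = a i \<bullet> v}" "j \<le> i" "i < DIM('v)"
  then show "a i \<bullet> z = 0" unfolding difference_set_def by (auto simp: inner_diff_right)
next
  fix z assume z: "\<forall>i. j \<le> i \<and> i < DIM('v) \<longrightarrow> a i \<bullet> z = 0"
  have "v + z \<in> {x. \<forall>i. j \<le> i \<and> i < DIM('v) \<longrightarrow> a i \<bullet> x = a i \<bullet> v}" using z by (auto simp: inner_add_right)
  then show "z \<in> difference_set {x. \<forall>i. j \<le> i \<and> i < DIM('v) \<longrightarrow> a i \<bullet> x = a i \<bullet> v}"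
    unfolding difference_set_def by (intro CollectI exI[of _ "v + z"] exI[of _ v]) auto
qed

lemma coordinate_subspace_eq_span:
  assumes bi: "biorthogonal u a" and j: "j \<le> DIM('v)"
  shows "{x. \<forall>i. j \<le> i \<and> i < DIM('v) \<longrightarrow> a i \<bullet> x = a i \<bullet> v} = (+) (v::'v::euclidean_space) ` span (u ` {..<j})"
proof safe
  fix x assume x: "\<forall>i. j \<le> i \<and> i < DIM('v) \<longrightarrow> a i \<bullet> x = a i \<bullet> v"
  have "x - v = (\<Sum>k<DIM('v). (a k \<bullet> (x - v)) *\<^sub>R u k)" by (rule biorthogonal_expansion[OF bi])
  also have "\<dots> = (\<Sum>k<j. (a k \<bullet> (x - v)) *\<^sub>R u k)"
    by (rule sum.mono_neutral_right) (use j x in \<open>auto simp: inner_diff_right\<close>)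
  finally have "x - v \<in> span (u ` {..<j})"
    by (metis (no_types, lifting) image_eqI lessThan_iff span_base span_scale span_sum)
  then show "x \<in> (+) v ` span (u ` {..<j})" by (intro image_eqI[of _ _ "x - v"]) auto
next
  fix y i assume y: "y \<in> span (u ` {..<j})" and i: "j \<le> i" "i < DIM('v)"
  have "span (u ` {..<j}) \<subseteq> {z. a i \<bullet> z = 0}"
    by (rule span_minimal) (use biorthogonal_inner[OF bi] i j in \<open>auto simp: subspace_hyperplane\<close>)
  then show "a i \<bullet> (v + y) = a i \<bullet> v" using y by (auto simp: inner_add_right)
qed

lemma aff_dim_coordinate_subspace:
  assumes bi: "biorthogonal u a" and j: "j \<le> DIM('v)"
  shows "aff_dim {x. \<forall>i. j \<le> i \<and> i < DIM('v) \<longrightarrow> a i \<bullet> x = a i \<bullet> (v::'v::euclidean_space)} = int j"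
proof -
  have au: "a i \<bullet> u k = (if i = k then 1 else 0)" if "i < DIM('v)" "k < DIM('v)" for i k
    using biorthogonal_inner[OF bi that] .
  have inj: "inj_on u {..<j}"
  proof (rule inj_onI)
    fix i k assume "i \<in> {..<j}" "k \<in> {..<j}" "u i = u k"
    then show "i = k" using au[of i i] au[of i k] j by (auto split: if_splits)
  qed
  have indep: "independent (u ` {..<j})"
  proof (rule independent_if_scalars_zero)
    fix f x assume sum0: "(\<Sum>y\<in>u ` {..<j}. f y *\<^sub>R y) = 0" and x: "x \<in> u ` {..<j}"
    then obtain i where i: "i < j" "x = u i" by auto
    have "0 = a i \<bullet> (\<Sum>y\<in>u ` {..<j}. f y *\<^sub>R y)" using sum0 by simp
    also have "\<dots> = (\<Sum>k<j. f (u k) * (a i \<bullet> u k))"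
      by (simp add: inner_sum_right sum.reindex[OF inj])
    also have "\<dots> = (\<Sum>k<j. if k = i then f (u k) else 0)"
      using au i j by (intro sum.cong) auto
    also have "\<dots> = f x" using i by simp
    finally show "f x = 0" by simp
  qed simp
  have "dim (u ` {..<j}) = j" using dim_eq_card_independent[OF indep] card_image[OF inj] by simp
  then show ?thesis
    unfolding coordinate_subspace_eq_span[OF bi j] by (simp add: aff_dim_translation_eq aff_dim_subspace dim_span)
qed

lemma coordinate_flag_singular:
  assumes bi: "biorthogonal u a" and C: "\<And>i. i < DIM('v) \<Longrightarrow> {x. a i \<bullet> x = a i \<bullet> v} \<in> C"
  shows "coordinate_flag a (v::'v::euclidean_space) \<in> singular_flags C"
  unfolding singular_flags_def
proof (intro CollectI conjI allI impI)
  show "length (coordinate_flag a v) = DIM('v)" unfolding coordinate_flag_def by simp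
next
  fix j assume j: "j < DIM('v)"
  define F where "F = (\<lambda>i. {x. a i \<bullet> x = a i \<bullet> v}) ` {j..<DIM('v)}"
  have "coordinate_flag a v ! j = \<Inter>F" unfolding nth_coordinate_flag[OF j] F_def by auto
  moreover have "F \<subseteq> C" "F \<noteq> {}" unfolding F_def using C j by auto
  moreover have "v \<in> coordinate_flag a v ! j" unfolding nth_coordinate_flag[OF j] by simp
  moreover have "aff_dim (coordinate_flag a v ! j) = int j"
    unfolding nth_coordinate_flag[OF j] using aff_dim_coordinate_subspace[OF bi] j by simp
  ultimately show "coordinate_flag a v ! j \<in> C_k C j" unfolding C_k_def by blast
next
  fix j assume "Suc j < DIM('v)"
  then show "coordinate_flag a v ! j \<subseteq> coordinate_flag a v ! Suc j" by (auto simp: nth_coordinate_flag)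
qed

lemma coordinate_flag_nth_0:
  assumes "biorthogonal u a"
  shows "coordinate_flag a v ! 0 = {v::'v::euclidean_space}"
  using nth_coordinate_flag[of 0 a v] coordinate_subspace_eq_span[OF assms, of 0 v] by simp

lemma coordinate_flag_frame:
  fixes v :: "'v::euclidean_space"
  assumes bi: "biorthogonal u a"
  defines "u' \<equiv> fst (flag_frame (coordinate_flag a v))"
  shows "\<And>i k. k < i \<Longrightarrow> i < DIM('v) \<Longrightarrow> a i \<bullet> u' k = 0"
    and "\<And>k. k < DIM('v) \<Longrightarrow> a k \<bullet> u' k \<noteq> 0"
proof -
  have dir: "map difference_set (coordinate_flag a v) ! k = {z. \<forall>i. k \<le> i \<and> i < DIM('v) \<longrightarrow> a i \<bullet> z = 0}"
    if "k < DIM('v)" for k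
    using that by (simp add: coordinate_flag_def difference_set_coordinate_subspace)
  have "frame_adapted (map difference_set (coordinate_flag a v)) u"
    unfolding frame_adapted_def using biorthogonal_inner[OF bi] by (auto simp: dir)
  then have ad: "frame_adapted (map difference_set (coordinate_flag a v)) u'"
    unfolding u'_def by (rule flag_frame_adapted[OF bi])
  show low: "a i \<bullet> u' k = 0" if "k < i" "i < DIM('v)" for i k
  proof -
    have k: "k < DIM('v)" "Suc k < DIM('v)" using that by auto
    have "u' k \<in> (if Suc k < DIM('v) then map difference_set (coordinate_flag a v) ! Suc k else UNIV)"
      using ad k(1) unfolding frame_adapted_def by blast
    then have "u' k \<in> map difference_set (coordinate_flag a v) ! Suc k" using k(2) by simp
    then show ?thesis using that unfolding dir[OF k(2)] by auto
  qed
  show "a k \<bullet> u' k \<noteq> 0" if k: "k < DIM('v)" for k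
  proof
    assume "a k \<bullet> u' k = 0"
    then have "u' k \<in> map difference_set (coordinate_flag a v) ! k"
      using low k by (auto simp: dir le_less)
    then show False using ad k unfolding frame_adapted_def by blast
  qed
qed

definition coordinate_box :: "(nat \<Rightarrow> 'v::euclidean_space) \<Rightarrow> 'v \<Rightarrow> (nat \<Rightarrow> real) \<Rightarrow> 'v set" where
  "coordinate_box a v c = {x. \<forall>i<DIM('v). a i \<bullet> v \<le> a i \<bullet> x \<and> a i \<bullet> x \<le> a i \<bullet> v + c i}"

lemma subset_hyperplane_if_rel_interior_on_hyperplane:
  assumes x0: "x0 \<in> rel_interior S" and sub: "S \<subseteq> {x. \<alpha> \<bullet> x \<le> \<beta>}" and eq: "\<alpha> \<bullet> x0 = \<beta>"
  shows "S \<subseteq> {x. \<alpha> \<bullet> x = \<beta>}"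
proof
  fix y assume y: "y \<in> S"
  obtain e where e: "e > 0" "cball x0 e \<inter> affine hull S \<subseteq> S"
    using x0 unfolding mem_rel_interior_cball by blast
  have x0S: "x0 \<in> S" using x0 rel_interior_subset by blast
  show "y \<in> {x. \<alpha> \<bullet> x = \<beta>}"
  proof (cases "y = x0")
    case True
    then show ?thesis using eq by simp
  next
    case False
    define t where "t = e / norm (x0 - y)"
    have t0: "t > 0" unfolding t_def using e False by simp
    define z where "z = (1 + t) *\<^sub>R x0 + (- t) *\<^sub>R y"
    have "z \<in> affine hull S"
      unfolding z_def by (rule mem_affine[OF affine_affine_hull]) (auto intro: hull_inc x0S y)
    moreover have "dist x0 z = e"
    proof -
      have "x0 - z = t *\<^sub>R (y - x0)" unfolding z_def by (simp add: algebra_simps)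
      then have "dist x0 z = t * norm (y - x0)" using t0 by (simp add: dist_norm)
      also have "\<dots> = e" unfolding t_def using False by (simp add: norm_minus_commute)
      finally show ?thesis .
    qed
    ultimately have "z \<in> S" using e(2) by auto
    then have "(1 + t) * \<beta> - t * (\<alpha> \<bullet> y) \<le> \<beta>"
      using sub eq unfolding z_def by (auto simp: inner_add_right inner_diff_right)
    then have "\<beta> \<le> \<alpha> \<bullet> y" using t0 by (simp add: algebra_simps)
    moreover have "\<alpha> \<bullet> y \<le> \<beta>" using sub y by auto
    ultimately show ?thesis by simp
  qed
qed

lemma polytope_coordinate_box:
  fixes a u :: "nat \<Rightarrow> 'v::euclidean_space"
  assumes bi: "biorthogonal u a"
  shows "polytope (coordinate_box a v c)"
proof -
  have box_eq: "coordinate_box a v c = \<Inter>((\<lambda>i. {x. (- a i) \<bullet> x \<le> - (a i \<bullet> v)}) ` {..<DIM('v)}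
      \<union> (\<lambda>i. {x. a i \<bullet> x \<le> a i \<bullet> v + c i}) ` {..<DIM('v)})"
    unfolding coordinate_box_def by auto
  have "polyhedron (coordinate_box a v c)" unfolding box_eq
    by (intro polyhedron_Inter) (auto intro: polyhedron_halfspace_le polyhedron_halfspace_ge)
  moreover have "coordinate_box a v c \<subseteq> cball v (\<Sum>k<DIM('v). \<bar>c k\<bar> * norm (u k))"
  proof
    fix x assume x: "x \<in> coordinate_box a v c"
    have "norm (x - v) \<le> (\<Sum>k<DIM('v). norm ((a k \<bullet> (x - v)) *\<^sub>R u k))"
      by (subst biorthogonal_expansion[OF bi, of "x - v"]) (rule norm_sum)
    also have "\<dots> \<le> (\<Sum>k<DIM('v). \<bar>c k\<bar> * norm (u k))"
    proof (rule sum_mono)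
      fix k assume "k \<in> {..<DIM('v)}"
      then have "\<bar>a k \<bullet> (x - v)\<bar> \<le> \<bar>c k\<bar>" using x unfolding coordinate_box_def by (auto simp: inner_diff_right)
      then show "norm ((a k \<bullet> (x - v)) *\<^sub>R u k) \<le> \<bar>c k\<bar> * norm (u k)" by (simp add: mult_right_mono)
    qed
    finally show "x \<in> cball v (\<Sum>k<DIM('v). \<bar>c k\<bar> * norm (u k))" by (simp add: dist_norm norm_minus_commute)
  qed
  ultimately show ?thesis using bounded_cball bounded_subset polytope_eq_bounded_polyhedron by blast
qed

lemma interior_coordinate_box:
  fixes a u :: "nat \<Rightarrow> 'v::euclidean_space"
  assumes bi: "biorthogonal u a" and c: "\<And>i. i < DIM('v) \<Longrightarrow> c i > 0"
  shows "{x. \<forall>i<DIM('v). a i \<bullet> v < a i \<bullet> x \<and> a i \<bullet> x < a i \<bullet> v + c i} \<subseteq> interior (coordinate_box a v c)"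
    and "interior (coordinate_box a v c) \<noteq> {}"
proof -
  have "{x. \<forall>i<DIM('v). a i \<bullet> v < a i \<bullet> x \<and> a i \<bullet> x < a i \<bullet> v + c i}
      = (\<Inter>i\<in>{..<DIM('v)}. {x. a i \<bullet> v < a i \<bullet> x} \<inter> {x. a i \<bullet> x < a i \<bullet> v + c i})" by auto
  then have "open {x. \<forall>i<DIM('v). a i \<bullet> v < a i \<bullet> x \<and> a i \<bullet> x < a i \<bullet> v + c i}"
    by (auto intro!: open_INT open_Int open_Collect_less continuous_intros)
  then show sub: "{x. \<forall>i<DIM('v). a i \<bullet> v < a i \<bullet> x \<and> a i \<bullet> x < a i \<bullet> v + c i} \<subseteq> interior (coordinate_box a v c)"
    by (rule interior_maximal[rotated]) (auto simp: coordinate_box_def)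
  have "v + (\<Sum>k<DIM('v). (c k / 2) *\<^sub>R u k) \<in> {x. \<forall>i<DIM('v). a i \<bullet> v < a i \<bullet> x \<and> a i \<bullet> x < a i \<bullet> v + c i}"
    using biorthogonal_coord_sum[OF bi] c by (auto simp: inner_add_right)
  then show "interior (coordinate_box a v c) \<noteq> {}" using sub by auto
qed

lemma facet_of_coordinate_box:
  fixes a u :: "nat \<Rightarrow> 'v::euclidean_space"
  assumes bi: "biorthogonal u a" and c: "\<And>i. i < DIM('v) \<Longrightarrow> c i > 0" and F: "F facet_of coordinate_box a v c"
  obtains i where "i < DIM('v)" "F \<subseteq> {x. a i \<bullet> x = a i \<bullet> v} \<or> F \<subseteq> {x. a i \<bullet> x = a i \<bullet> v + c i}"
proof -
  have face: "F face_of coordinate_box a v c" "F \<noteq> {}" "F \<noteq> coordinate_box a v c"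
    using F unfolding facet_of_def by auto
  obtain x0 where x0: "x0 \<in> rel_interior F"
    using rel_interior_eq_empty face_of_imp_convex[OF face(1)] face(2) by blast
  have F_box: "F \<subseteq> coordinate_box a v c" using face(1) face_of_imp_subset by blast
  have "x0 \<notin> interior (coordinate_box a v c)"
    using face_of_subset_rel_frontier[OF face(1,3)] rel_interior_subset[of F] x0
      rel_interior_nonempty_interior[OF interior_coordinate_box(2)[where c=c and v=v, OF bi c]] unfolding rel_frontier_def by auto
  then obtain i where i: "i < DIM('v)" "\<not> (a i \<bullet> v < a i \<bullet> x0 \<and> a i \<bullet> x0 < a i \<bullet> v + c i)"
    using interior_coordinate_box(1)[where c=c and v=v, OF bi c] by auto
  have "a i \<bullet> v \<le> a i \<bullet> x0 \<and> a i \<bullet> x0 \<le> a i \<bullet> v + c i"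
    using x0 rel_interior_subset F_box i(1) unfolding coordinate_box_def by blast
  then consider "a i \<bullet> x0 = a i \<bullet> v" | "a i \<bullet> x0 = a i \<bullet> v + c i" using i(2) by linarith
  then show thesis
  proof cases
    case 1
    have "F \<subseteq> {x. (- a i) \<bullet> x = - (a i \<bullet> v)}"
      by (rule subset_hyperplane_if_rel_interior_on_hyperplane[OF x0])
         (use F_box i(1) 1 in \<open>auto simp: coordinate_box_def\<close>)
    then show thesis using that[OF i(1)] by auto
  next
    case 2
    have "F \<subseteq> {x. a i \<bullet> x = a i \<bullet> v + c i}"
      by (rule subset_hyperplane_if_rel_interior_on_hyperplane[OF x0])
         (use F_box i(1) 2 in \<open>auto simp: coordinate_box_def\<close>)
    then show thesis using that[OF i(1)] by blast
  qed
qed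

lemma C_tope_coordinate_box:
  fixes a u :: "nat \<Rightarrow> 'v::euclidean_space"
  assumes bi: "biorthogonal u a" and c: "\<And>i. i < DIM('v) \<Longrightarrow> c i > 0"
    and lower: "\<And>i. i < DIM('v) \<Longrightarrow> {x. a i \<bullet> x = a i \<bullet> v} \<in> C"
    and upper: "\<And>i. i < DIM('v) \<Longrightarrow> {x. a i \<bullet> x = a i \<bullet> v + c i} \<in> C"
  shows "C_tope C (coordinate_box a v c)"
  unfolding C_tope_def
proof (intro conjI allI impI)
  have T: "polytope (coordinate_box a v c)" using polytope_coordinate_box[OF bi] .
  then show "polytope (coordinate_box a v c)" "compact (coordinate_box a v c)"
    by (simp_all add: polytope_imp_compact)
  show "closure (interior (coordinate_box a v c)) = coordinate_box a v c"
    using convex_closure_interior[OF polytope_imp_convex[OF T] interior_coordinate_box(2)[where c=c and v=v, OF bi c]]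
      polytope_imp_compact[OF T] by (simp add: compact_imp_closed closure_closed)
  fix F assume F: "F facet_of coordinate_box a v c"
  obtain i where "i < DIM('v)" "F \<subseteq> {x. a i \<bullet> x = a i \<bullet> v} \<or> F \<subseteq> {x. a i \<bullet> x = a i \<bullet> v + c i}"
    using facet_of_coordinate_box[where c=c and v=v and F=F, OF bi c F] by blast
  then show "\<exists>H\<in>C. F \<subseteq> H" using lower upper by blast
qed

text \<open>Exactly one sector at \<open>v\<close> enters the box: the one whose signs make each \<open>u\<^sub>i\<close> point into
  the half-space \<open>a\<^sub>i \<bullet> x \<ge> a\<^sub>i \<bullet> v\<close>.\<close>

lemma germ_coordinate_box:
  fixes v :: "'v::euclidean_space"
  assumes hyp: "countable_hyperplanes C" and bi: "biorthogonal u w"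
    and low: "\<And>i k. k < i \<Longrightarrow> i < DIM('v) \<Longrightarrow> a i \<bullet> u k = 0"
    and diag: "\<And>k. k < DIM('v) \<Longrightarrow> a k \<bullet> u k \<noteq> 0"
    and c: "\<And>i. i < DIM('v) \<Longrightarrow> 0 < c i" and s: "s \<subseteq> {..<DIM('v)}"
  shows "germ C (indicator (coordinate_box a v c \<inter> V' C)) v w s
           = (if s = {i. i < DIM('v) \<and> 0 < a i \<bullet> u i} then 1 else 0)"
proof (rule germ_eqI[OF hyp bi])
  define s0 where "s0 = {i. i < DIM('v) \<and> 0 < a i \<bullet> u i}"
  define A where "A = (\<lambda>i. (- a i, - (a i \<bullet> v))) ` {..<DIM('v)} \<union> (\<lambda>i. (a i, a i \<bullet> v + c i)) ` {..<DIM('v)}"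
  have "a i \<noteq> 0" if "i < DIM('v)" for i using diag[OF that] by auto
  then have A: "finite A" "\<forall>(\<alpha>,\<beta>)\<in>A. \<alpha> \<noteq> 0" unfolding A_def by auto
  have first: "first_nonzero (- a i) u = i" if "i < DIM('v)" for i
    unfolding first_nonzero_def using low diag that by (intro Least_equality) (auto simp: not_less[symmetric])
  have side_upper: "sector_side (a i) (a i \<bullet> v + c i) v u s" if "i < DIM('v)" for i
    unfolding sector_side_def using c[OF that] by simp
  have side_lower: "sector_side (- a i) (- (a i \<bullet> v)) v u s \<longleftrightarrow> (i \<in> s \<longleftrightarrow> i \<in> s0)" if "i < DIM('v)" for i
    unfolding sector_side_def first[OF that] s0_def sector_sign_def using diag[OF that] that by auto
  obtain d where d: "d > 0" "\<forall>x\<in>sector v w s d. \<forall>(\<alpha>,\<beta>)\<in>A. (\<alpha> \<bullet> x \<le> \<beta>) = sector_side \<alpha> \<beta> v u s"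
    using sector_side_cell[OF bi A] by blast
  have "x \<in> coordinate_box a v c \<longleftrightarrow> s = s0" if x: "x \<in> sector v w s d" for x
  proof -
    have "(a i \<bullet> v \<le> a i \<bullet> x) = (i \<in> s \<longleftrightarrow> i \<in> s0)" "a i \<bullet> x \<le> a i \<bullet> v + c i"
      if i: "i < DIM('v)" for i
    proof -
      have "(- a i, - (a i \<bullet> v)) \<in> A" "(a i, a i \<bullet> v + c i) \<in> A" unfolding A_def using i by blast+
      from this[THEN bspec[OF bspec[OF d(2) x]]]
      show "(a i \<bullet> v \<le> a i \<bullet> x) = (i \<in> s \<longleftrightarrow> i \<in> s0)" "a i \<bullet> x \<le> a i \<bullet> v + c i"
        using side_lower[OF i] side_upper[OF i] by simp_all
    qed
    then have "x \<in> coordinate_box a v c \<longleftrightarrow> (\<forall>i<DIM('v). i \<in> s \<longleftrightarrow> i \<in> s0)"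
      unfolding coordinate_box_def by auto
    also have "\<dots> \<longleftrightarrow> s = s0" using s unfolding s0_def by auto
    finally show ?thesis .
  qed
  then show "has_germ C (indicator (coordinate_box a v c \<inter> V' C)) v w s (if s = s0 then 1 else 0)"
    unfolding has_germ_def using d(1) by (intro exI[of _ d]) (auto simp: indicator_def)
qed

lemma germ_sum_coordinate_box:
  fixes v :: "'v::euclidean_space"
  assumes "countable_hyperplanes C" "biorthogonal u w"
    and "\<And>i k. k < i \<Longrightarrow> i < DIM('v) \<Longrightarrow> a i \<bullet> u k = 0" "\<And>k. k < DIM('v) \<Longrightarrow> a k \<bullet> u k \<noteq> 0"
    and "\<And>i. i < DIM('v) \<Longrightarrow> 0 < c i"
  shows "(\<Sum>s\<in>Pow {..<DIM('v)}. germ C (indicator (coordinate_box a v c \<inter> V' C)) v w s) = 1"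
proof -
  have "(\<Sum>s\<in>Pow {..<DIM('v)}. germ C (indicator (coordinate_box a v c \<inter> V' C)) v w s)
      = (\<Sum>s\<in>Pow {..<DIM('v)}. if s = {i. i < DIM('v) \<and> 0 < a i \<bullet> u i} then 1 else 0)"
    using germ_coordinate_box[OF assms] by (intro sum.cong) auto
  also have "\<dots> = 1" by auto
  finally show ?thesis .
qed

lemma dense_ex_inner_pos:
  assumes "closure \<Gamma> = UNIV" "a \<noteq> 0"
  obtains g where "g \<in> \<Gamma>" "0 < a \<bullet> g"
proof -
  have "open {x. 0 < a \<bullet> x}" by (intro open_Collect_less continuous_intros)
  moreover have "a \<in> {x. 0 < a \<bullet> x} \<inter> closure \<Gamma>" using assms by simp
  ultimately have "{x. 0 < a \<bullet> x} \<inter> \<Gamma> \<noteq> {}" using open_Int_closure_eq_empty by blast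
  then show thesis using that by blast
qed

context lattice_arrangement
begin

text \<open>The box spanned at \<open>v\<close> by the hyperplanes through \<open>v\<close> and their translates by suitable
  elements of the dense group \<open>\<Gamma>\<close> is a \<open>\<C>\<close>-tope with germ sum \<open>1\<close> at the coordinate flag.\<close>

lemma ex_flag_tope_germ_sum_1:
  assumes v: "v \<in> points_P C" and dense: "closure \<Gamma> = UNIV"
  shows "\<exists>fl T. fl \<in> singular_flags C \<and> fl ! 0 = {v} \<and> C_tope C T
           \<and> flag_germ_sum C (indicator (T \<inter> V' C)) fl = 1"
proof -
  obtain a where a: "\<And>i. i < DIM('v) \<Longrightarrow> a i \<noteq> 0" "\<And>i. i < DIM('v) \<Longrightarrow> {x. a i \<bullet> x = a i \<bullet> v} \<in> C"
    and ker: "\<And>z. (\<And>k. k < DIM('v) \<Longrightarrow> a k \<bullet> z = 0) \<Longrightarrow> z = 0"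
    using points_P_normals[OF _ v] hyperplanes unfolding countable_hyperplanes_def by blast
  obtain u where bi: "biorthogonal u a" using ex_biorthogonal_dual[OF ker] by blast
  define fl where "fl = coordinate_flag a v"
  have fl: "fl \<in> singular_flags C" "fl ! 0 = {v}"
    unfolding fl_def using coordinate_flag_singular[OF bi a(2)] coordinate_flag_nth_0[OF bi] by auto
  have "\<exists>g. g \<in> \<Gamma> \<and> 0 < a i \<bullet> g" if "i < DIM('v)" for i
    using dense_ex_inner_pos[OF dense a(1)[OF that]] by blast
  then obtain g where g: "\<And>i. i < DIM('v) \<Longrightarrow> g i \<in> \<Gamma> \<and> 0 < a i \<bullet> g i" by metis
  define c where "c i = a i \<bullet> g i" for i
  have upper: "{x. a i \<bullet> x = a i \<bullet> v + c i} \<in> C" if "i < DIM('v)" for i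
  proof -
    have "(+) (g i) ` {x. a i \<bullet> x = a i \<bullet> v} \<in> C"
      using invariant a(2)[OF that] g[OF that] unfolding translation_invariant_def by blast
    then show ?thesis unfolding translation_hyperplane c_def .
  qed
  have c: "\<And>i. i < DIM('v) \<Longrightarrow> 0 < c i" using g unfolding c_def by blast
  have "flag_point fl = v" using fl(2) unfolding flag_point_def by simp
  then have "flag_germ_sum C (indicator (coordinate_box a v c \<inter> V' C)) fl = 1"
    unfolding flag_germ_sum_def fl_def
    using germ_sum_coordinate_box[OF hyperplanes flag_frame_biorthogonal coordinate_flag_frame[OF bi] c]
    by (simp add: fl_def)
  then show ?thesis using fl C_tope_coordinate_box[OF bi c a(2) upper] by blast
qed

lemma ex_xi_eq_1:
  assumes v: "v \<in> points_P C" and dense: "closure \<Gamma> = UNIV"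
  shows "\<exists>fl e. fl \<in> singular_flags C \<and> fl ! 0 = {v} \<and> e \<in> carrier (H0 \<Gamma> C)
           \<and> xi (SOME f. f \<in> e) (flag_orbit \<Gamma> fl) = 1"
proof -
  obtain fl T where fl: "fl \<in> singular_flags C" "fl ! 0 = {v}" "C_tope C T"
    "flag_germ_sum C (indicator (T \<inter> V' C)) fl = 1"
    using ex_flag_tope_germ_sum_1[OF v dense] by blast
  define J where "J = flag_orbit \<Gamma> fl"
  have J: "J \<in> flag_orbits \<Gamma> C" unfolding J_def flag_orbits_def using fl(1) by blast
  have "fl \<in> flag_orbit \<Gamma> (orbit_rep J)"
    using orbit_rep(2)[OF J] \<Gamma>_zero unfolding J_def flag_orbit_def by (auto intro!: exI[of _ 0] simp: translate_flag_0)
  then obtain g where g: "g \<in> \<Gamma>" "fl = translate_flag g (orbit_rep J)" unfolding flag_orbit_def by blast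
  have T: "indicator (T \<inter> V' C) \<in> CV C" by (rule CV.gen[OF fl(3)])
  then have "odd_translates J (indicator (T \<inter> V' C)) \<in> odd_translate_sets J"
    unfolding odd_translate_sets_def by blast
  moreover have "g \<in> odd_translates J (indicator (T \<inter> V' C))"
    unfolding odd_translates_def using g fl(4) by simp
  ultimately obtain D where D: "D \<in> odd_translate_sets J" "parity_val \<Gamma> (odd_translate_sets J) D = 1"
    using ex_parity_val_eq_1[OF finite_B independent_B] odd_translate_sets[OF J] unfolding \<Gamma>_eq by blast
  then obtain f where f: "f \<in> CV C" "D = odd_translates J f" unfolding odd_translate_sets_def by blast
  define e where "e = coinv_subgroup \<Gamma> C #>\<^bsub>CV_group C\<^esub> f"
  have e: "e \<in> carrier (H0 \<Gamma> C)"
    unfolding e_def H0_def carrier_FactGroup using f(1) by (simp add: CV_group_def)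
  have "xi (SOME f. f \<in> e) = xi f" unfolding e_def by (rule xi_coset_rep[OF f(1)])
  then have "xi (SOME f. f \<in> e) J = 1" using J D f(2) by (simp add: xi_def)
  then show ?thesis using fl(1,2) e unfolding J_def by blast
qed

end

theorem mainTheorem5:
  fixes \<Gamma> :: "'v::euclidean_space set" and \<C> :: "'v set set"
  assumes gamma_sub: "subgroup \<Gamma> \<lparr>carrier = UNIV, monoid.mult = (+), one = (0::'v)\<rparr>"
    and gamma_free: "fg_free_subgroup \<Gamma>"
    and gamma_dense: "closure \<Gamma> = UNIV"
    and C_hyp: "\<forall>H\<in>\<C>. affine_hyperplane H"
    and C_countable: "countable \<C>"
    and C_inv: "\<forall>H\<in>\<C>. \<forall>g\<in>\<Gamma>. (+) g ` H \<in> \<C>"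
    and C_orbits: "\<exists>S. finite S \<and> S \<subseteq> \<C> \<and> \<C> = {(+) g ` H | g H. g \<in> \<Gamma> \<and> H \<in> S}"
    and C_span: "span (normals \<C>) = UNIV"
  shows "\<exists>\<xi>. \<xi> \<in> hom (H0 \<Gamma> \<C>) (Z2_sum \<Gamma> \<C>) \<and>
           (\<forall>v\<in>points_P \<C>. \<exists>fl e. fl \<in> singular_flags \<C> \<and> fl ! 0 = {v} \<and>
               e \<in> carrier (H0 \<Gamma> \<C>) \<and> \<xi> e (flag_orbit \<Gamma> fl) = 1)"
proof -
  obtain B where B: "finite B" "int_independent B" "\<Gamma> = int_span B"
    using gamma_free unfolding fg_free_subgroup_def by blast
  interpret lattice_arrangement \<Gamma> \<C> B
    using C_hyp C_countable C_inv B C_orbits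
    by unfold_locales (auto simp: countable_hyperplanes_def translation_invariant_def)
  show ?thesis using hom_H0_xi ex_xi_eq_1[OF _ gamma_dense] by blast
qed

end
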